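(* Let $\mathcal{G}$ be a reaction network with species $X_1,\dots,X_n$, $n\ge2$, and let $\tilde{\mathcal{G}}$ be its homeostasis-associated reaction network. Suppose that for every choice of $n$ distinct reactions $\mathbf{y}_1\to\mathbf{y}'_1,\dots,\mathbf{y}_n\to\mathbf{y}'_n$ of $\tilde{\mathcal{G}}$, $$\det(\mathbf{y}_1,\dots,\mathbf{y}_n)\,\det(\mathbf{y}'_1-\mathbf{y}_1,\dots,\mathbf{y}'_n-\mathbf{y}_n)=0.$$ Then for every choice of positive rate constants $\mathbf{k}$ for $\mathcal{G}$, $\det B(\mathbf{x},\mathbf{k})=0$ for all $\mathbf{x}\in\mathbb{R}^n_{>0}$, where $B$ is the Jacobian $D_{\mathbf{x}}\mathbf{f}(\mathbf{x},\mathbf{k})$ of $\mathcal{G}$ with first row and last column deleted. Consequently, the mass-action input–output system of $\mathcal{G}$ (input $X_1$, output $X_n$) exhibits perfect homeostasis at every linearly stable positive equilibrium: if $(\tilde{\mathbf{x}},\tilde\zeta)$ is such an equilibrium and $\zeta\mapsto\mathbf{x}(\zeta)$ is the smooth branch of equilibria with $\mathbf{x}(\tilde\zeta)=\tilde{\mathbf{x}}$ given by the implicit function theorem, then $\frac{d x_n}{d\zeta}(\zeta)=0$ for all $\zeta$ in a neighbourhood of $\tilde\zeta$.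
   Context: A reaction network with species $X_1,\dots,X_n$ is a finite set of reactions $\mathbf{y}\to\mathbf{y}'$ with $\mathbf{y}\ne\mathbf{y}'\in\mathbb{Z}^n_{\ge0}$. Given positive rate constants $\mathbf{k}$, the mass-action vector field is $\mathbf{f}(\mathbf{x},\mathbf{k})=\sum_{\mathbf{y}\to\mathbf{y}'}k_{\mathbf{y}\to\mathbf{y}'}\mathbf{x}^{\mathbf{y}}(\mathbf{y}'-\mathbf{y})$ on $\mathbb{R}^n_{>0}$. Homeostasis-associated network $\tilde{\mathcal{G}}$ of $\mathcal{G}$: Step 1: replace each reaction $\mathbf{y}\to\mathbf{y}'$ of $\mathcal{G}$ by $\mathbf{y}\to\hat{\mathbf{y}}'$, where $\hat y'_1=y_1$ and $\hat y'_i=y'_i$ for $i\ge2$; reactions that become trivial are discarded and coinciding reactions are identified. Step 2: add the reaction $X_n\to X_1$. Input–output system: $\dot{\mathbf{x}}=\mathbf{f}(\mathbf{x},\mathbf{k})+\zeta\mathbf{e}_1$ with parameter $\zeta$, input $x_1$, output $x_n$. An equilibrium is linearly stable if all eigenvalues of the Jacobian there have negative real part. Perfect homeostasis means the derivative of the input–output function $\zeta\mapsto x_n(\zeta)$ along the equilibrium branch vanishes on an entire interval. *)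

theory Defs
  imports Complex_Main "HOL-Analysis.Derivative" "Jordan_Normal_Form.Char_Poly" "Jordan_Normal_Form.Determinant"
begin

text \<open>Species X_1,...,X_n are indexed 0,...,n-1. A complex is a function
  nat => nat vanishing outside {0..<n}; a reaction is a pair (y, y').\<close>

type_synonym complex_vec = "nat \<Rightarrow> nat"
type_synonym reaction = "complex_vec \<times> complex_vec"

definition is_complex :: "nat \<Rightarrow> complex_vec \<Rightarrow> bool" where
  "is_complex n y \<longleftrightarrow> (\<forall>i\<ge>n. y i = 0)"

definition reaction_network :: "nat \<Rightarrow> reaction set \<Rightarrow> bool" where
  "reaction_network n R \<longleftrightarrow> finite R \<and>
     (\<forall>(y, y') \<in> R. is_complex n y \<and> is_complex n y' \<and> y \<noteq> y')"

definition unit_complex :: "nat \<Rightarrow> complex_vec" where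
  "unit_complex i = (\<lambda>j. if j = i then 1 else 0)"

text \<open>Homeostasis-associated network: replace y -> y' by y -> y'(X_1 := y_1),
  discard trivial reactions (set semantics identifies coinciding ones), add X_n -> X_1.\<close>
definition homeostasis_network :: "nat \<Rightarrow> reaction set \<Rightarrow> reaction set" where
  "homeostasis_network n R =
     {(y, y'(0 := y 0)) | y y'. (y, y') \<in> R \<and> y'(0 := y 0) \<noteq> y}
     \<union> {(unit_complex (n - 1), unit_complex 0)}"

definition monomial :: "nat \<Rightarrow> (nat \<Rightarrow> real) \<Rightarrow> complex_vec \<Rightarrow> real" where
  "monomial n x y = (\<Prod>j<n. x j ^ y j)"

definition mass_action :: "nat \<Rightarrow> reaction set \<Rightarrow> (reaction \<Rightarrow> real) \<Rightarrow> (nat \<Rightarrow> real) \<Rightarrow> nat \<Rightarrow> real" where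
  "mass_action n R k x i =
     (\<Sum>r\<in>R. k r * monomial n x (fst r) * (real (snd r i) - real (fst r i)))"

definition jacobian :: "nat \<Rightarrow> ((nat \<Rightarrow> real) \<Rightarrow> nat \<Rightarrow> real) \<Rightarrow> (nat \<Rightarrow> real) \<Rightarrow> real mat" where
  "jacobian n F x = mat n n (\<lambda>(i, j). deriv (\<lambda>t. F (x(j := t)) i) (x j))"

definition B_matrix :: "nat \<Rightarrow> reaction set \<Rightarrow> (reaction \<Rightarrow> real) \<Rightarrow> (nat \<Rightarrow> real) \<Rightarrow> real mat" where
  "B_matrix n R k x =
     mat (n - 1) (n - 1) (\<lambda>(i, j). jacobian n (mass_action n R k) x $$ (i + 1, j))"

definition positive_vec :: "nat \<Rightarrow> (nat \<Rightarrow> real) \<Rightarrow> bool" where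
  "positive_vec n x \<longleftrightarrow> (\<forall>i<n. x i > 0)"

definition io_field :: "nat \<Rightarrow> reaction set \<Rightarrow> (reaction \<Rightarrow> real) \<Rightarrow> real \<Rightarrow> (nat \<Rightarrow> real) \<Rightarrow> nat \<Rightarrow> real" where
  "io_field n R k \<zeta> x i = mass_action n R k x i + (if i = 0 then \<zeta> else 0)"

definition io_equilibrium :: "nat \<Rightarrow> reaction set \<Rightarrow> (reaction \<Rightarrow> real) \<Rightarrow> (nat \<Rightarrow> real) \<Rightarrow> real \<Rightarrow> bool" where
  "io_equilibrium n R k x \<zeta> \<longleftrightarrow> positive_vec n x \<and> (\<forall>i<n. io_field n R k \<zeta> x i = 0)"

definition linearly_stable :: "nat \<Rightarrow> reaction set \<Rightarrow> (reaction \<Rightarrow> real) \<Rightarrow> (nat \<Rightarrow> real) \<Rightarrow> real \<Rightarrow> bool" where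
  "linearly_stable n R k x \<zeta> \<longleftrightarrow>
     (\<forall>ev::complex. eigenvalue (map_mat complex_of_real (jacobian n (io_field n R k \<zeta>) x)) ev
        \<longrightarrow> Re ev < 0)"

definition equilibrium_branch :: "nat \<Rightarrow> reaction set \<Rightarrow> (reaction \<Rightarrow> real) \<Rightarrow> (real \<Rightarrow> nat \<Rightarrow> real) \<Rightarrow> real \<Rightarrow> real \<Rightarrow> (nat \<Rightarrow> real) \<Rightarrow> bool" where
  "equilibrium_branch n R k X d z0 x0 \<longleftrightarrow> d > 0 \<and> (\<forall>i<n. X z0 i = x0 i) \<and>
     (\<forall>z. \<bar>z - z0\<bar> < d \<longrightarrow> io_equilibrium n R k (X z) z \<and>
         (\<forall>i<n. (\<lambda>s. X s i) differentiable (at z)))"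

end

theory Submission
  imports Defs
begin

text \<open>The Jacobian of a mass-action system is a sum of rank-one matrices
  \<open>k_r x^(y_r) (y'_r - y_r) (y_r / x)^T\<close>, one per reaction. The same sum taken over the
  homeostasis-associated network is the Jacobian with its first row replaced by the unit row \<open>e_n\<close>,
  so its determinant is \<open>\<plusminus>det B\<close>. By the Cauchy-Binet formula, the determinant of a sum of
  rank-one matrices is a combination of products of \<open>n \<times> n\<close> minors of the two families of vectors,
  which vanish by hypothesis; hence \<open>det B = 0\<close>. Along a branch of equilibria
  \<open>J(x(\<zeta>)) x'(\<zeta>) = -e_1\<close>, and \<open>det B\<close> is the cofactor of the last entry of the first row of
  \<open>J\<close>, so Cramer's rule gives \<open>x_n'(\<zeta>) = 0\<close> wherever \<open>J\<close> is nonsingular, as it is near a linearly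
  stable equilibrium. The branch itself comes from a contraction-mapping proof of the implicit
  function theorem.\<close>

section \<open>Partial derivatives of mass-action vector fields\<close>

definition monomial_pderiv :: "nat \<Rightarrow> (nat \<Rightarrow> real) \<Rightarrow> complex_vec \<Rightarrow> nat \<Rightarrow> real" where
  "monomial_pderiv n x y j = real (y j) * x j ^ (y j - 1) * (\<Prod>l\<in>{..<n} - {j}. x l ^ y l)"

definition mass_action_pderiv ::
    "nat \<Rightarrow> reaction set \<Rightarrow> (reaction \<Rightarrow> real) \<Rightarrow> nat \<Rightarrow> nat \<Rightarrow> (nat \<Rightarrow> real) \<Rightarrow> real" where
  "mass_action_pderiv n R k i j x =
     (\<Sum>r\<in>R. k r * monomial_pderiv n x (fst r) j * (real (snd r i) - real (fst r i)))"

lemma has_real_derivative_monomial: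
  assumes "\<And>l. l < n \<Longrightarrow> ((\<lambda>t. \<gamma> t l) has_real_derivative g l) (at t0)"
  shows "((\<lambda>t. monomial n (\<gamma> t) y) has_real_derivative
           (\<Sum>l<n. monomial_pderiv n (\<gamma> t0) y l * g l)) (at t0)"
proof -
  have "((\<lambda>t. \<gamma> t l ^ y l) has_derivative (*) (real (y l) * \<gamma> t0 l ^ (y l - 1) * g l)) (at t0)"
    if "l \<in> {..<n}" for l
    using assms[of l] that unfolding has_field_derivative_def[symmetric]
    by (auto intro!: derivative_eq_intros)
  from has_derivative_prod[OF this]
  have "((\<lambda>t. \<Prod>l<n. \<gamma> t l ^ y l) has_derivative
     (\<lambda>h. \<Sum>i<n. (real (y i) * \<gamma> t0 i ^ (y i - 1) * g i) * h * (\<Prod>j\<in>{..<n} - {i}. \<gamma> t0 j ^ y j)))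
     (at t0)" .
  moreover have "(\<lambda>h. \<Sum>i<n. (real (y i) * \<gamma> t0 i ^ (y i - 1) * g i) * h * (\<Prod>j\<in>{..<n} - {i}. \<gamma> t0 j ^ y j))
      = (*) (\<Sum>l<n. monomial_pderiv n (\<gamma> t0) y l * g l)"
    by (auto simp: monomial_pderiv_def sum_distrib_left mult_ac intro!: sum.cong)
  ultimately show ?thesis unfolding has_field_derivative_def monomial_def by simp
qed

lemma has_real_derivative_mass_action:
  assumes "\<And>l. l < n \<Longrightarrow> ((\<lambda>t. \<gamma> t l) has_real_derivative g l) (at t0)"
  shows "((\<lambda>t. mass_action n R k (\<gamma> t) i) has_real_derivative
           (\<Sum>l<n. mass_action_pderiv n R k i l (\<gamma> t0) * g l)) (at t0)"
proof -
  have "((\<lambda>t. mass_action n R k (\<gamma> t) i) has_real_derivative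
     (\<Sum>r\<in>R. k r * (\<Sum>l<n. monomial_pderiv n (\<gamma> t0) (fst r) l * g l) * (real (snd r i) - real (fst r i))))
     (at t0)"
    unfolding mass_action_def
    by (intro DERIV_sum DERIV_cmult_right DERIV_cmult has_real_derivative_monomial assms)
  also have "(\<Sum>r\<in>R. k r * (\<Sum>l<n. monomial_pderiv n (\<gamma> t0) (fst r) l * g l) * (real (snd r i) - real (fst r i)))
     = (\<Sum>l<n. mass_action_pderiv n R k i l (\<gamma> t0) * g l)"
    unfolding mass_action_pderiv_def sum_distrib_left sum_distrib_right
    by (subst sum.swap) (auto intro!: sum.cong simp: mult_ac)
  finally show ?thesis .
qed

lemma has_real_derivative_io_field:
  assumes "\<And>l. l < n \<Longrightarrow> ((\<lambda>t. \<gamma> t l) has_real_derivative g l) (at t0)"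
  shows "((\<lambda>t. io_field n R k \<zeta> (\<gamma> t) i) has_real_derivative
           (\<Sum>l<n. mass_action_pderiv n R k i l (\<gamma> t0) * g l)) (at t0)"
  unfolding io_field_def using has_real_derivative_mass_action[OF assms]
  by (auto intro!: derivative_eq_intros)

lemma jacobian_eqI:
  assumes "\<And>\<gamma> g t0 i. (\<And>l. l < n \<Longrightarrow> ((\<lambda>t. \<gamma> t l) has_real_derivative g l) (at t0)) \<Longrightarrow>
             ((\<lambda>t. F (\<gamma> t) i) has_real_derivative (\<Sum>l<n. J i l (\<gamma> t0) * g l)) (at t0)"
  shows "jacobian n F x = mat n n (\<lambda>(i, j). J i j x)"
proof (rule eq_matI)
  fix i j assume "i < dim_row (mat n n (\<lambda>(i, j). J i j x))" "j < dim_col (mat n n (\<lambda>(i, j). J i j x))"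
  then have j: "j < n" by simp
  have "((\<lambda>t. F (x(j := t)) i) has_real_derivative
      (\<Sum>l<n. J i l (x(j := x j)) * (if l = j then 1 else 0))) (at (x j))"
    by (rule assms) (auto intro!: derivative_eq_intros)
  moreover have "(\<Sum>l<n. J i l (x(j := x j)) * (if l = j then 1 else 0)) = J i j x"
    using j by (simp add: if_distrib cong: if_cong)
  ultimately show "jacobian n F x $$ (i, j) = mat n n (\<lambda>(i, j). J i j x) $$ (i, j)"
    using \<open>i < dim_row _\<close> j by (simp add: jacobian_def DERIV_imp_deriv)
qed (simp_all add: jacobian_def)

lemma jacobian_mass_action:
  "jacobian n (mass_action n R k) x = mat n n (\<lambda>(i, j). mass_action_pderiv n R k i j x)"
  by (rule jacobian_eqI) (rule has_real_derivative_mass_action)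

lemma jacobian_io_field:
  "jacobian n (io_field n R k \<zeta>) x = mat n n (\<lambda>(i, j). mass_action_pderiv n R k i j x)"
  by (rule jacobian_eqI) (rule has_real_derivative_io_field)

lemma B_matrix_eq:
  "B_matrix n R k x = mat (n - 1) (n - 1) (\<lambda>(i, j). mass_action_pderiv n R k (Suc i) j x)"
  by (auto simp: B_matrix_def jacobian_mass_action intro!: eq_matI)

lemma monomial_pderiv_eq:
  assumes "j < n" and "x j > 0"
  shows "monomial_pderiv n x y j = real (y j) * monomial n x y / x j"
proof (cases "y j = 0")
  case False
  then have "x j ^ y j = x j * x j ^ (y j - 1)" by (metis power_eq_if)
  moreover have "monomial n x y = x j ^ y j * (\<Prod>l\<in>{..<n} - {j}. x l ^ y l)"
    unfolding monomial_def using assms(1) by (subst prod.remove[of _ j]) auto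
  ultimately show ?thesis unfolding monomial_pderiv_def using assms(2) by (simp add: field_simps)
qed (simp add: monomial_pderiv_def)

lemma mass_action_pderiv_cong:
  "(\<And>l. l < n \<Longrightarrow> x l = x' l) \<Longrightarrow> j < n \<Longrightarrow> mass_action_pderiv n R k i j x = mass_action_pderiv n R k i j x'"
  unfolding mass_action_pderiv_def monomial_pderiv_def by (auto intro!: sum.cong prod.cong)

lemma tendsto_mass_action:
  assumes "\<And>l. l < n \<Longrightarrow> ((\<lambda>t. s t l) \<longlongrightarrow> x l) F"
  shows "((\<lambda>t. mass_action n R k (s t) i) \<longlongrightarrow> mass_action n R k x i) F"
  unfolding mass_action_def monomial_def using assms by (auto intro!: tendsto_intros)

lemma tendsto_mass_action_pderiv:
  assumes "\<And>l. l < n \<Longrightarrow> ((\<lambda>t. s t l) \<longlongrightarrow> x l) F" and "j < n"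
  shows "((\<lambda>t. mass_action_pderiv n R k i j (s t)) \<longlongrightarrow> mass_action_pderiv n R k i j x) F"
  unfolding mass_action_pderiv_def monomial_pderiv_def using assms by (auto intro!: tendsto_intros)

lemma mean_value_mass_action:
  "\<exists>t. 0 \<le> t \<and> t \<le> 1 \<and> mass_action n R k x i - mass_action n R k x' i =
     (\<Sum>j<n. mass_action_pderiv n R k i j (\<lambda>l. x' l + t * (x l - x' l)) * (x j - x' j))"
proof -
  define \<phi> where "\<phi> t = mass_action n R k (\<lambda>l. x' l + t * (x l - x' l)) i" for t
  have "(\<phi> has_real_derivative
      (\<Sum>j<n. mass_action_pderiv n R k i j (\<lambda>l. x' l + t * (x l - x' l)) * (x j - x' j))) (at t)" for t
    unfolding \<phi>_def by (rule has_real_derivative_mass_action) (auto intro!: derivative_eq_intros)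
  from MVT2[of 0 1 \<phi>, OF _ this] obtain t where "0 < t" "t < 1"
    "\<phi> 1 - \<phi> 0 = (1 - 0) * (\<Sum>j<n. mass_action_pderiv n R k i j (\<lambda>l. x' l + t * (x l - x' l)) * (x j - x' j))"
    by auto
  then show ?thesis unfolding \<phi>_def by (intro exI[of _ t]) auto
qed

lemma mean_value_mass_action_choice:
  obtains t where "\<And>a i. 0 \<le> t a i \<and> t a i \<le> 1 \<and>
    mass_action n R k (x a) i - mass_action n R k (x' a) i =
    (\<Sum>j<n. mass_action_pderiv n R k i j (\<lambda>l. x' a l + t a i * (x a l - x' a l)) * (x a j - x' a j))"
proof -
  have "\<forall>a. \<exists>ta. \<forall>i. 0 \<le> ta i \<and> ta i \<le> 1 \<and>
    mass_action n R k (x a) i - mass_action n R k (x' a) i =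
    (\<Sum>j<n. mass_action_pderiv n R k i j (\<lambda>l. x' a l + ta i * (x a l - x' a l)) * (x a j - x' a j))"
    using mean_value_mass_action by (intro allI choice) blast
  from choice[OF this] show ?thesis using that by blast
qed

section \<open>Determinants of matrices given by entry functions\<close>

lemma det_mat_expand:
  fixes M :: "nat \<Rightarrow> nat \<Rightarrow> 'a :: comm_ring_1"
  shows "det (mat n n (\<lambda>(i, j). M i j)) =
           (\<Sum>p\<in>{p. p permutes {0..<n}}. signof p * (\<Prod>i=0..<n. M i (p i)))"
  by (subst det_def'[of _ n]) (auto intro!: sum.cong prod.cong)

lemma permutes_lessThan_bound: "(p :: nat \<Rightarrow> nat) permutes {0..<n} \<Longrightarrow> i < n \<Longrightarrow> p i < n"
  using permutes_in_image[of p "{0..<n}" i] by auto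

lemma tendsto_det_mat:
  fixes M :: "'b \<Rightarrow> nat \<Rightarrow> nat \<Rightarrow> real"
  assumes "\<And>i j. i < n \<Longrightarrow> j < n \<Longrightarrow> ((\<lambda>t. M t i j) \<longlongrightarrow> L i j) F"
  shows "((\<lambda>t. det (mat n n (\<lambda>(i, j). M t i j))) \<longlongrightarrow> det (mat n n (\<lambda>(i, j). L i j))) F"
  unfolding det_mat_expand
  by (rule tendsto_sum, rule tendsto_mult_left, rule tendsto_prod)
     (use assms permutes_lessThan_bound in auto)

lemma det_mat_scale:
  fixes M :: "nat \<Rightarrow> nat \<Rightarrow> 'a :: comm_ring_1"
  shows "det (mat n n (\<lambda>(i, j). d i * c j * M i j)) =
           (\<Prod>i=0..<n. d i) * (\<Prod>j=0..<n. c j) * det (mat n n (\<lambda>(i, j). M i j))"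
proof -
  have "(\<Prod>i=0..<n. d i * c (p i) * M i (p i)) = (\<Prod>i=0..<n. d i) * (\<Prod>j=0..<n. c j) * (\<Prod>i=0..<n. M i (p i))"
    if "p permutes {0..<n}" for p
    using prod.permute[OF that, of c] by (simp add: prod.distrib comp_def)
  then show ?thesis unfolding det_mat_expand sum_distrib_left
    by (auto intro!: sum.cong simp: mult_ac)
qed

lemma det_mat_permute_rows:
  fixes M :: "nat \<Rightarrow> nat \<Rightarrow> 'a :: comm_ring_1"
  assumes "p permutes {0..<n}"
  shows "det (mat n n (\<lambda>(i, j). M (p i) j)) = signof p * det (mat n n (\<lambda>(i, j). M i j))"
proof -
  have "mat n n (\<lambda>(i, j). M (p i) j) = mat n n (\<lambda>(i, j). mat n n (\<lambda>(i, j). M i j) $$ (p i, j))"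
    using permutes_lessThan_bound[OF assms] by (auto intro!: eq_matI)
  then show ?thesis using det_permute_rows[of "mat n n (\<lambda>(i, j). M i j)" n p] assms by simp
qed

lemma det_mat_transpose:
  fixes M :: "nat \<Rightarrow> nat \<Rightarrow> 'a :: comm_ring_1"
  shows "det (mat n n (\<lambda>(i, j). M j i)) = det (mat n n (\<lambda>(i, j). M i j))"
proof -
  have "mat n n (\<lambda>(i, j). M j i) = transpose_mat (mat n n (\<lambda>(i, j). M i j))"
    by (auto intro!: eq_matI)
  then show ?thesis using det_transpose[of "mat n n (\<lambda>(i, j). M i j)" n] by simp
qed

lemma det_sum_outer_products_expand:
  fixes a b :: "'r \<Rightarrow> nat \<Rightarrow> 'a :: comm_ring_1"
  assumes "finite S"
  shows "det (mat n n (\<lambda>(i, j). \<Sum>r\<in>S. a r i * b r j)) =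
    (\<Sum>\<tau>\<in>Pi\<^sub>E {0..<n} (\<lambda>_. S). (\<Prod>i=0..<n. a (\<tau> i) i) * det (mat n n (\<lambda>(i, j). b (\<tau> i) j)))"
proof -
  define Pn where "Pn = {p. p permutes {0..<n}}"
  have "det (mat n n (\<lambda>(i, j). \<Sum>r\<in>S. a r i * b r j)) =
      (\<Sum>p\<in>Pn. signof p * (\<Prod>i=0..<n. \<Sum>r\<in>S. a r i * b r (p i)))"
    unfolding det_mat_expand Pn_def ..
  also have "\<dots> = (\<Sum>p\<in>Pn. signof p * (\<Sum>\<tau>\<in>Pi\<^sub>E {0..<n} (\<lambda>_. S). \<Prod>i=0..<n. a (\<tau> i) i * b (\<tau> i) (p i)))"
    using assms by (subst prod_sum_PiE) auto
  also have "\<dots> = (\<Sum>\<tau>\<in>Pi\<^sub>E {0..<n} (\<lambda>_. S). \<Sum>p\<in>Pn.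
      (\<Prod>i=0..<n. a (\<tau> i) i) * (signof p * (\<Prod>i=0..<n. b (\<tau> i) (p i))))"
    unfolding sum_distrib_left prod.distrib
    by (subst sum.swap) (auto intro!: sum.cong simp: mult_ac)
  finally show ?thesis unfolding det_mat_expand Pn_def sum_distrib_left .
qed

lemma sum_injective_tuples_permute:
  fixes S :: "'a set" and f :: "(nat \<Rightarrow> 'a) \<Rightarrow> 'b :: comm_monoid_add"
  assumes p: "p permutes {0..<n}"
  defines "Inj \<equiv> {\<tau>\<in>Pi\<^sub>E {0..<n} (\<lambda>_. S). inj_on \<tau> {0..<n}}"
  shows "(\<Sum>\<tau>\<in>Inj. f \<tau>) = (\<Sum>\<tau>\<in>Inj. f (\<tau> \<circ> p))"
proof -
  have closed: "\<tau> \<circ> q \<in> Inj" if \<tau>: "\<tau> \<in> Inj" and q: "q permutes {0..<n}" for \<tau> q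
  proof -
    have "\<tau> \<circ> q \<in> Pi\<^sub>E {0..<n} (\<lambda>_. S)"
      using \<tau> permutes_lessThan_bound[OF q] permutes_not_in[OF q]
      unfolding Inj_def PiE_def Pi_def extensional_def by auto
    moreover have "inj_on (\<tau> \<circ> q) {0..<n}"
      using \<tau> permutes_inj_on[OF q] permutes_image[OF q] unfolding Inj_def by (auto intro: comp_inj_on)
    ultimately show ?thesis unfolding Inj_def by simp
  qed
  have inv: "Hilbert_Choice.inv p permutes {0..<n}" using permutes_inv[OF p] .
  show ?thesis
  proof (rule sum.reindex_bij_witness[where i="\<lambda>\<tau>. \<tau> \<circ> p" and j="\<lambda>\<tau>. \<tau> \<circ> Hilbert_Choice.inv p"])
    fix \<tau> assume "\<tau> \<in> Inj"
    show "\<tau> \<circ> p \<circ> Hilbert_Choice.inv p = \<tau>" "\<tau> \<circ> Hilbert_Choice.inv p \<circ> p = \<tau>"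
      using permutes_inv_o[OF p] by (simp_all add: o_assoc[symmetric])
    show "\<tau> \<circ> p \<in> Inj" "\<tau> \<circ> Hilbert_Choice.inv p \<in> Inj"
      using closed \<open>\<tau> \<in> Inj\<close> p inv by blast+
  qed (simp add: o_assoc[symmetric] permutes_inv_o[OF p])
qed

lemma sum_injective_tuples_antisymmetrize:
  fixes S :: "'r set" and a :: "'r \<Rightarrow> nat \<Rightarrow> 'a :: comm_ring_1" and D :: "(nat \<Rightarrow> 'r) \<Rightarrow> 'a"
  assumes alternating: "\<And>\<tau> p. p permutes {0..<n} \<Longrightarrow> D (\<tau> \<circ> p) = signof p * D \<tau>"
  defines "Inj \<equiv> {\<tau>\<in>Pi\<^sub>E {0..<n} (\<lambda>_. S). inj_on \<tau> {0..<n}}"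
  shows "of_nat (fact n) * (\<Sum>\<tau>\<in>Inj. (\<Prod>i=0..<n. a (\<tau> i) i) * D \<tau>)
           = (\<Sum>\<tau>\<in>Inj. D \<tau> * det (mat n n (\<lambda>(i, j). a (\<tau> j) i)))"
proof -
  define Pn where "Pn = {p. p permutes {0..<n}}"
  let ?P = "\<lambda>\<tau>. \<Prod>i=0..<n. a (\<tau> i) i"
  have "of_nat (fact n) * (\<Sum>\<tau>\<in>Inj. ?P \<tau> * D \<tau>) = (\<Sum>p\<in>Pn. \<Sum>\<tau>\<in>Inj. ?P \<tau> * D \<tau>)"
    using card_permutations[of "{0..<n}" n] unfolding Pn_def by simp
  also have "\<dots> = (\<Sum>p\<in>Pn. \<Sum>\<tau>\<in>Inj. ?P (\<tau> \<circ> p) * (signof p * D \<tau>))"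
  proof (rule sum.cong[OF refl])
    fix p assume "p \<in> Pn"
    then have p: "p permutes {0..<n}" unfolding Pn_def by simp
    show "(\<Sum>\<tau>\<in>Inj. ?P \<tau> * D \<tau>) = (\<Sum>\<tau>\<in>Inj. ?P (\<tau> \<circ> p) * (signof p * D \<tau>))"
      unfolding Inj_def using sum_injective_tuples_permute[OF p, where S=S and f="\<lambda>\<tau>. ?P \<tau> * D \<tau>"]
      by (simp add: alternating[OF p])
  qed
  also have "\<dots> = (\<Sum>\<tau>\<in>Inj. D \<tau> * det (mat n n (\<lambda>(i, j). a (\<tau> j) i)))"
    unfolding det_mat_expand Pn_def sum_distrib_left
    by (subst sum.swap) (auto intro!: sum.cong simp: mult_ac)
  finally show ?thesis .
qed

lemma det_sum_outer_products_eq_0: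
  fixes a b :: "'r \<Rightarrow> nat \<Rightarrow> 'a :: field_char_0"
  assumes "finite S"
    and minors: "\<And>\<tau>. \<forall>i<n. \<tau> i \<in> S \<Longrightarrow> inj_on \<tau> {0..<n} \<Longrightarrow>
      det (mat n n (\<lambda>(i, j). a (\<tau> j) i)) * det (mat n n (\<lambda>(i, j). b (\<tau> j) i)) = 0"
  shows "det (mat n n (\<lambda>(i, j). \<Sum>r\<in>S. a r i * b r j)) = 0"
proof -
  define Inj where "Inj = {\<tau>\<in>Pi\<^sub>E {0..<n} (\<lambda>_. S). inj_on \<tau> {0..<n}}"
  define D where "D \<tau> = det (mat n n (\<lambda>(i, j). b (\<tau> i) j))" for \<tau>
  have "D \<tau> = 0" if "\<not> inj_on \<tau> {0..<n}" for \<tau>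
  proof -
    from that obtain i j where "i < n" "j < n" "i \<noteq> j" "\<tau> i = \<tau> j"
      unfolding inj_on_def by auto
    then show ?thesis unfolding D_def by (intro det_identical_rows[of _ n i j]) (auto simp: row_mat)
  qed
  then have expand: "det (mat n n (\<lambda>(i, j). \<Sum>r\<in>S. a r i * b r j)) = (\<Sum>\<tau>\<in>Inj. (\<Prod>i=0..<n. a (\<tau> i) i) * D \<tau>)"
    unfolding det_sum_outer_products_expand[OF assms(1)] D_def[symmetric] Inj_def
    using assms(1) by (intro sum.mono_neutral_right) (auto simp: finite_PiE)
  have alternating: "D (\<tau> \<circ> p) = signof p * D \<tau>" if "p permutes {0..<n}" for \<tau> p
    unfolding D_def using det_mat_permute_rows[OF that, of "\<lambda>i j. b (\<tau> i) j"] by simp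
  have minor_products: "D \<tau> * det (mat n n (\<lambda>(i, j). a (\<tau> j) i)) = 0" if "\<tau> \<in> Inj" for \<tau>
  proof -
    have "\<forall>i<n. \<tau> i \<in> S" "inj_on \<tau> {0..<n}" using that unfolding Inj_def by (auto dest: PiE_mem)
    from minors[OF this] show ?thesis
      unfolding D_def det_mat_transpose[of n "\<lambda>j i. b (\<tau> j) i"] by (simp add: mult.commute)
  qed
  have "of_nat (fact n) * (\<Sum>\<tau>\<in>Inj. (\<Prod>i=0..<n. a (\<tau> i) i) * D \<tau>) =
      (\<Sum>\<tau>\<in>Inj. D \<tau> * det (mat n n (\<lambda>(i, j). a (\<tau> j) i)))"
    unfolding Inj_def by (rule sum_injective_tuples_antisymmetrize[OF alternating])
  also have "\<dots> = 0" using minor_products by (intro sum.neutral) blast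
  finally show ?thesis using expand by simp
qed

lemma sum_delta_mult:
  fixes f :: "nat \<Rightarrow> 'a :: semiring_1"
  shows "l < n \<Longrightarrow> (\<Sum>j<n. (if l = j then 1 else 0) * f j) = f l"
  by (simp add: if_distrib[of "\<lambda>u. u * _"] cong: if_cong)

lemma mat_inverse_exists:
  fixes M :: "nat \<Rightarrow> nat \<Rightarrow> 'a :: field"
  assumes "det (mat n n (\<lambda>(i, j). M i j)) \<noteq> 0"
  obtains C where "\<And>i j. i < n \<Longrightarrow> j < n \<Longrightarrow> (\<Sum>m<n. C i m * M m j) = (if i = j then 1 else 0)"
    and "\<And>i j. i < n \<Longrightarrow> j < n \<Longrightarrow> (\<Sum>m<n. M i m * C m j) = (if i = j then 1 else 0)"
proof
  define A where "A = mat n n (\<lambda>(i, j). M i j)"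
  have A: "A \<in> carrier_mat n n" unfolding A_def by simp
  have adj: "adj_mat A \<in> carrier_mat n n" using adj_mat(1)[OF A] .
  fix i j assume ij: "i < n" "j < n"
  have "(adj_mat A * A) $$ (i, j) = (det A \<cdot>\<^sub>m 1\<^sub>m n) $$ (i, j)" using adj_mat(3)[OF A] by simp
  then have "(\<Sum>m\<in>{0..<n}. adj_mat A $$ (i, m) * M m j) = det A * (if i = j then 1 else 0)"
    using ij adj A unfolding A_def by (auto simp: scalar_prod_def)
  then show "(\<Sum>m<n. adj_mat A $$ (i, m) / det A * M m j) = (if i = j then 1 else 0)"
    using assms unfolding A_def[symmetric]
    by (auto simp: sum_divide_distrib[symmetric] atLeast0LessThan)
  have "(A * adj_mat A) $$ (i, j) = (det A \<cdot>\<^sub>m 1\<^sub>m n) $$ (i, j)" using adj_mat(2)[OF A] by simp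
  then have "(\<Sum>m\<in>{0..<n}. M i m * adj_mat A $$ (m, j)) = det A * (if i = j then 1 else 0)"
    using ij adj A unfolding A_def by (auto simp: scalar_prod_def)
  then show "(\<Sum>m<n. M i m * (adj_mat A $$ (m, j) / det A)) = (if i = j then 1 else 0)"
    using assms unfolding A_def[symmetric]
    by (auto simp: sum_divide_distrib[symmetric] atLeast0LessThan)
qed

lemma mat_solve_exists:
  fixes A :: "nat \<Rightarrow> nat \<Rightarrow> 'a :: field"
  assumes "det (mat n n (\<lambda>(i, j). A i j)) \<noteq> 0"
  obtains v where "\<And>m. m < n \<Longrightarrow> (\<Sum>j<n. A m j * v j) = c m"
proof -
  obtain C where "\<And>i j. i < n \<Longrightarrow> j < n \<Longrightarrow> (\<Sum>m<n. C i m * A m j) = (if i = j then 1 else 0)"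
    and AC: "\<And>i j. i < n \<Longrightarrow> j < n \<Longrightarrow> (\<Sum>m<n. A i m * C m j) = (if i = j then 1 else 0)"
    by (rule mat_inverse_exists[OF assms]) auto
  have "(\<Sum>j<n. A m j * (\<Sum>i<n. C j i * c i)) = c m" if "m < n" for m
  proof -
    have "(\<Sum>j<n. A m j * (\<Sum>i<n. C j i * c i)) = (\<Sum>i<n. (\<Sum>j<n. A m j * C j i) * c i)"
      by (simp add: sum_distrib_left sum_distrib_right mult_ac) (rule sum.swap)
    also have "\<dots> = (\<Sum>i<n. (if m = i then 1 else 0) * c i)" using AC[OF that] by simp
    also have "\<dots> = c m" using sum_delta_mult[OF that] .
    finally show ?thesis .
  qed
  then show ?thesis by (rule that)
qed

lemma left_kernel_trivial:
  fixes M :: "nat \<Rightarrow> nat \<Rightarrow> 'a :: field"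
  assumes "det (mat n n (\<lambda>(i, j). M i j)) \<noteq> 0"
    and "\<And>j. j < n \<Longrightarrow> (\<Sum>m<n. w m * M m j) = 0"
    and "i < n"
  shows "w i = 0"
proof -
  obtain C where "\<And>i j. i < n \<Longrightarrow> j < n \<Longrightarrow> (\<Sum>m<n. C i m * M m j) = (if i = j then 1 else 0)"
    and C: "\<And>i j. i < n \<Longrightarrow> j < n \<Longrightarrow> (\<Sum>m<n. M i m * C m j) = (if i = j then 1 else 0)"
    by (rule mat_inverse_exists[OF assms(1)]) auto
  have "w i = (\<Sum>l<n. w l * (if l = i then 1 else 0))" using assms(3) by (simp add: if_distrib cong: if_cong)
  also have "\<dots> = (\<Sum>l<n. w l * (\<Sum>m<n. M l m * C m i))" using C assms(3) by simp
  also have "\<dots> = (\<Sum>m<n. (\<Sum>l<n. w l * M l m) * C m i)"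
    by (simp add: sum_distrib_left sum_distrib_right mult_ac) (rule sum.swap)
  also have "\<dots> = 0" using assms(2) by simp
  finally show ?thesis .
qed

lemma det_mat_eq_0_left_kernel:
  fixes M :: "nat \<Rightarrow> nat \<Rightarrow> 'a :: field"
  assumes "det (mat n n (\<lambda>(i, j). M i j)) = 0"
  obtains u where "\<exists>i<n. u i \<noteq> 0" and "\<And>j. j < n \<Longrightarrow> (\<Sum>i<n. u i * M i j) = 0"
proof -
  have "det (mat n n (\<lambda>(i, j). M j i)) = 0" using assms det_mat_transpose[of n M] by simp
  then obtain v where v: "v \<in> carrier_vec n" "v \<noteq> 0\<^sub>v n" "mat n n (\<lambda>(i, j). M j i) *\<^sub>v v = 0\<^sub>v n"
    using det_0_iff_vec_prod_zero[of "mat n n (\<lambda>(i, j). M j i)" n] by auto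
  have "\<exists>i<n. v $ i \<noteq> 0"
  proof (rule ccontr)
    assume "\<not> ?thesis"
    then have "v = 0\<^sub>v n" using v(1) by (auto intro!: eq_vecI)
    with v(2) show False by simp
  qed
  moreover have "(\<Sum>i<n. v $ i * M i j) = 0" if "j < n" for j
    using arg_cong[OF v(3), of "\<lambda>w. w $ j"] that v(1)
    by (auto simp: scalar_prod_def atLeast0LessThan mult.commute)
  ultimately show ?thesis using that[of "\<lambda>i. v $ i"] by blast
qed

text \<open>A Cramer-rule argument: a left kernel vector of the rows \<open>1..n-1\<close>, restricted to the first
  \<open>n-1\<close> columns, pairs with \<open>M v\<close> to isolate the last component of \<open>v\<close>.\<close>
lemma last_component_eq_0:
  fixes M :: "nat \<Rightarrow> nat \<Rightarrow> 'a :: field"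
  assumes M: "det (mat n n (\<lambda>(i, j). M i j)) \<noteq> 0"
    and minor: "det (mat (n - 1) (n - 1) (\<lambda>(i, j). M (Suc i) j)) = 0"
    and Mv: "\<And>i. 0 < i \<Longrightarrow> i < n \<Longrightarrow> (\<Sum>j<n. M i j * v j) = 0"
  shows "v (n - 1) = 0"
proof -
  obtain u where u: "\<exists>i<n - 1. u i \<noteq> 0" "\<And>j. j < n - 1 \<Longrightarrow> (\<Sum>i<n - 1. u i * M (Suc i) j) = 0"
    using det_mat_eq_0_left_kernel[OF minor] by blast
  then have n: "n = Suc (n - 1)" by auto
  define w where "w m = (if m = 0 then 0 else u (m - 1))" for m
  have w_sum: "(\<Sum>m<n. w m * f m) = (\<Sum>i<n - 1. u i * f (Suc i))" for f :: "nat \<Rightarrow> 'a"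
    by (subst n) (simp only: sum.lessThan_Suc_shift w_def, simp)
  have wM: "(\<Sum>m<n. w m * M m j) = 0" if "j < n - 1" for j
    using u(2)[OF that] by (simp add: w_sum)
  have last_column: "(\<Sum>m<n. w m * M m (n - 1)) \<noteq> 0"
  proof
    assume "(\<Sum>m<n. w m * M m (n - 1)) = 0"
    with wM have "(\<Sum>m<n. w m * M m j) = 0" if "j < n" for j
      using that by (cases "j = n - 1") auto
    then have "w (Suc i) = 0" if "i < n - 1" for i
      using left_kernel_trivial[OF M] that by simp
    with u(1) show False unfolding w_def by auto
  qed
  have "0 = (\<Sum>m<n. w m * (\<Sum>j<n. M m j * v j))"
    using Mv by (simp add: w_sum)
  also have "\<dots> = (\<Sum>j<n. v j * (\<Sum>m<n. w m * M m j))"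
    by (simp add: sum_distrib_left mult_ac) (rule sum.swap)
  also have "\<dots> = v (n - 1) * (\<Sum>m<n. w m * M m (n - 1))"
    by (subst (1) n, subst sum.lessThan_Suc) (simp add: wM)
  finally show ?thesis using last_column by simp
qed

lemma det_mat_first_row_unit:
  fixes N :: "'a :: comm_ring_1 mat"
  assumes N: "N \<in> carrier_mat n n" and "0 < n"
    and row: "\<And>j. j < n \<Longrightarrow> N $$ (0, j) = (if j = n - 1 then 1 else 0)"
  shows "det N = (-1) ^ (n - 1) * det (mat (n - 1) (n - 1) (\<lambda>(i, j). N $$ (Suc i, j)))"
proof -
  have "det N = (\<Sum>j<n. N $$ (0, j) * cofactor N 0 j)"
    by (rule laplace_expansion_row[OF N]) (use \<open>0 < n\<close> in auto)
  also have "\<dots> = (\<Sum>j<n. if j = n - 1 then cofactor N 0 j else 0)"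
    by (rule sum.cong) (auto simp: row)
  also have "\<dots> = cofactor N 0 (n - 1)"
    using \<open>0 < n\<close> by simp
  also have "\<dots> = (-1) ^ (n - 1) * det (mat_delete N 0 (n - 1))"
    by (simp add: cofactor_def)
  also have "mat_delete N 0 (n - 1) = mat (n - 1) (n - 1) (\<lambda>(i, j). N $$ (Suc i, j))"
    using N by (auto simp: mat_delete_def intro!: eq_matI)
  finally show ?thesis .
qed

section \<open>The homeostasis determinant\<close>

definition reduced_reaction :: "reaction \<Rightarrow> reaction" where
  "reduced_reaction r = (fst r, (snd r)(0 := fst r 0))"

definition output_input_reaction :: "nat \<Rightarrow> reaction" where
  "output_input_reaction n = (unit_complex (n - 1), unit_complex 0)"

definition reaction_vector :: "reaction \<Rightarrow> nat \<Rightarrow> real" where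
  "reaction_vector r i = real (snd r i) - real (fst r i)"

lemma homeostasis_network_eq:
  "homeostasis_network n R =
     {s \<in> reduced_reaction ` R. snd s \<noteq> fst s} \<union> {output_input_reaction n}"
proof -
  have "{(y, y'(0 := y 0)) | y y'. (y, y') \<in> R \<and> y'(0 := y 0) \<noteq> y} =
      {s \<in> reduced_reaction ` R. snd s \<noteq> fst s}"
    unfolding reduced_reaction_def by (auto simp: image_iff intro!: bexI[of _ "(_, _)"])
  then show ?thesis unfolding homeostasis_network_def output_input_reaction_def by simp
qed

lemma fst_reduced_reaction [simp]: "fst (reduced_reaction r) = fst r"
  by (simp add: reduced_reaction_def)

lemma reaction_vector_reduced_reaction:
  "reaction_vector (reduced_reaction r) i = (if i = 0 then 0 else reaction_vector r i)"
  by (simp add: reaction_vector_def reduced_reaction_def)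

text \<open>Coinciding reduced reactions are identified in the homeostasis network, so their rate terms
  are collected into one weight; trivial reduced reactions, which the network discards,
  do not contribute.\<close>
lemma sum_homeostasis_network:
  fixes c :: "reaction \<Rightarrow> 'a :: comm_semiring_1"
  assumes "finite R" and trivial: "\<And>s. snd s = fst s \<Longrightarrow> G s = 0"
  shows "(\<Sum>s\<in>homeostasis_network n R.
            ((\<Sum>r\<in>{r\<in>R. reduced_reaction r = s}. c r) + (if s = output_input_reaction n then d else 0)) * G s)
       = (\<Sum>r\<in>R. c r * G (reduced_reaction r)) + d * G (output_input_reaction n)"
    (is "(\<Sum>s\<in>_. ?w s * G s) = _")
proof -
  let ?T = "insert (output_input_reaction n) (reduced_reaction ` R)"
  have "(\<Sum>s\<in>homeostasis_network n R. ?w s * G s) = (\<Sum>s\<in>?T. ?w s * G s)"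
  proof (rule sum.mono_neutral_left)
    show "\<forall>s\<in>?T - homeostasis_network n R. ?w s * G s = 0"
    proof
      fix s assume "s \<in> ?T - homeostasis_network n R"
      then have "snd s = fst s" unfolding homeostasis_network_eq by auto
      then show "?w s * G s = 0" using trivial by simp
    qed
  qed (use \<open>finite R\<close> in \<open>auto simp: homeostasis_network_eq\<close>)
  also have "\<dots> = (\<Sum>s\<in>?T. \<Sum>r\<in>{r\<in>R. reduced_reaction r = s}. c r * G s)
                 + (\<Sum>s\<in>?T. (if s = output_input_reaction n then d else 0) * G s)"
    by (simp add: sum.distrib distrib_right sum_distrib_right)
  also have "(\<Sum>s\<in>?T. \<Sum>r\<in>{r\<in>R. reduced_reaction r = s}. c r * G s)
      = (\<Sum>s\<in>?T. \<Sum>r\<in>{r\<in>R. reduced_reaction r = s}. c r * G (reduced_reaction r))"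
    by (intro sum.cong) auto
  also have "\<dots> = (\<Sum>r\<in>R. c r * G (reduced_reaction r))"
    by (rule sum.group) (use \<open>finite R\<close> in auto)
  also have "(\<Sum>s\<in>?T. (if s = output_input_reaction n then d else 0) * G s) = d * G (output_input_reaction n)"
    using \<open>finite R\<close> by (simp add: if_distrib[of "\<lambda>u. u * _"] sum.delta' cong: if_cong)
  finally show ?thesis .
qed

definition homeostasis_weight ::
    "nat \<Rightarrow> reaction set \<Rightarrow> (reaction \<Rightarrow> real) \<Rightarrow> (nat \<Rightarrow> real) \<Rightarrow> reaction \<Rightarrow> real" where
  "homeostasis_weight n R k x s =
     (\<Sum>r\<in>{r\<in>R. reduced_reaction r = s}. k r * monomial n x (fst r))
     + (if s = output_input_reaction n then x (n - 1) else 0)"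

text \<open>The reduced reactions do not change \<open>X_1\<close> and the added reaction \<open>X_n \<rightarrow> X_1\<close> contributes the
  unit row \<open>e_n\<close>, so this is the Jacobian with its first row replaced by \<open>e_n\<close>.\<close>
definition homeostasis_matrix ::
    "nat \<Rightarrow> reaction set \<Rightarrow> (reaction \<Rightarrow> real) \<Rightarrow> (nat \<Rightarrow> real) \<Rightarrow> real mat" where
  "homeostasis_matrix n R k x = mat n n (\<lambda>(i, j). \<Sum>s\<in>homeostasis_network n R.
     (homeostasis_weight n R k x s * reaction_vector s i) * (real (fst s j) / x j))"

lemma homeostasis_matrix_index:
  assumes "finite R" "n \<ge> 2" "positive_vec n x" "i < n" "j < n"
  shows "homeostasis_matrix n R k x $$ (i, j) =
      (\<Sum>r\<in>R. k r * monomial n x (fst r) * (reaction_vector (reduced_reaction r) i * (real (fst r j) / x j)))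
      + (if j = n - 1 then reaction_vector (output_input_reaction n) i else 0)"
proof -
  let ?G = "\<lambda>s. reaction_vector s i * (real (fst s j) / x j)"
  have "homeostasis_matrix n R k x $$ (i, j) =
      (\<Sum>s\<in>homeostasis_network n R. homeostasis_weight n R k x s * ?G s)"
    using assms by (simp add: homeostasis_matrix_def mult.assoc)
  also have "\<dots> = (\<Sum>r\<in>R. k r * monomial n x (fst r) * ?G (reduced_reaction r))
      + x (n - 1) * ?G (output_input_reaction n)"
    unfolding homeostasis_weight_def
    by (rule sum_homeostasis_network[OF \<open>finite R\<close>]) (simp add: reaction_vector_def)
  also have "x (n - 1) * ?G (output_input_reaction n) =
      (if j = n - 1 then reaction_vector (output_input_reaction n) i else 0)"
    using assms(2,3) unfolding positive_vec_def
    by (simp add: output_input_reaction_def unit_complex_def less_imp_neq[symmetric])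
  finally show ?thesis by simp
qed

lemma homeostasis_matrix_first_row:
  assumes "finite R" "n \<ge> 2" "positive_vec n x" "j < n"
  shows "homeostasis_matrix n R k x $$ (0, j) = (if j = n - 1 then 1 else 0)"
  using homeostasis_matrix_index[OF assms(1-3) _ assms(4)] assms(2)
  unfolding reaction_vector_reduced_reaction
  by (simp add: reaction_vector_def output_input_reaction_def unit_complex_def)

lemma homeostasis_matrix_minor:
  assumes "finite R" "n \<ge> 2" "positive_vec n x"
  shows "mat (n - 1) (n - 1) (\<lambda>(i, j). homeostasis_matrix n R k x $$ (Suc i, j)) = B_matrix n R k x"
proof (rule eq_matI)
  fix i j assume "i < dim_row (B_matrix n R k x)" "j < dim_col (B_matrix n R k x)"
  then have ij: "i < n - 1" "j < n - 1" by (simp_all add: B_matrix_def)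
  have "homeostasis_matrix n R k x $$ (Suc i, j) =
      (\<Sum>r\<in>R. k r * monomial n x (fst r) * (reaction_vector r (Suc i) * (real (fst r j) / x j)))"
    using homeostasis_matrix_index[OF assms, of "Suc i" j] ij by (simp add: reaction_vector_reduced_reaction)
  also have "\<dots> = mass_action_pderiv n R k (Suc i) j x"
    unfolding mass_action_pderiv_def reaction_vector_def
    using monomial_pderiv_eq[of j n x] assms(3) ij unfolding positive_vec_def
    by (auto intro!: sum.cong)
  finally show "mat (n - 1) (n - 1) (\<lambda>(i, j). homeostasis_matrix n R k x $$ (Suc i, j)) $$ (i, j)
      = B_matrix n R k x $$ (i, j)"
    using ij by (simp add: B_matrix_eq)
qed (simp_all add: B_matrix_def)

lemma det_homeostasis_matrix_eq_0:
  assumes "finite R"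
    and hyp: "\<And>rs :: nat \<Rightarrow> reaction.
       (\<forall>i<n. rs i \<in> homeostasis_network n R) \<Longrightarrow> inj_on rs {0..<n} \<Longrightarrow>
       det (mat n n (\<lambda>(i, j). real (fst (rs j) i))) *
       det (mat n n (\<lambda>(i, j). real (snd (rs j) i) - real (fst (rs j) i))) = 0"
  shows "det (homeostasis_matrix n R k x) = 0"
  unfolding homeostasis_matrix_def
proof (rule det_sum_outer_products_eq_0)
  show "finite (homeostasis_network n R)" using \<open>finite R\<close> by (simp add: homeostasis_network_eq)
  fix \<tau> assume \<tau>: "\<forall>i<n. \<tau> i \<in> homeostasis_network n R" "inj_on \<tau> {0..<n}"
  let ?w = "homeostasis_weight n R k x"
  have "det (mat n n (\<lambda>(i, j). ?w (\<tau> j) * reaction_vector (\<tau> j) i)) =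
      (\<Prod>j=0..<n. ?w (\<tau> j)) * det (mat n n (\<lambda>(i, j). reaction_vector (\<tau> j) i))"
    using det_mat_scale[where d="\<lambda>_. 1" and c="\<lambda>j. ?w (\<tau> j)" and M="\<lambda>i j. reaction_vector (\<tau> j) i"] by simp
  moreover have "det (mat n n (\<lambda>(i, j). real (fst (\<tau> j) i) / x i)) =
      (\<Prod>i=0..<n. 1 / x i) * det (mat n n (\<lambda>(i, j). real (fst (\<tau> j) i)))"
    using det_mat_scale[where d="\<lambda>i. 1 / x i" and c="\<lambda>_. 1" and M="\<lambda>i j. real (fst (\<tau> j) i)"] by simp
  ultimately show "det (mat n n (\<lambda>(i, j). ?w (\<tau> j) * reaction_vector (\<tau> j) i)) *
      det (mat n n (\<lambda>(i, j). real (fst (\<tau> j) i) / x i)) = 0"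
    using hyp[OF \<tau>] by (auto simp: reaction_vector_def)
qed

lemma det_B_matrix_eq_0:
  assumes "n \<ge> 2" and "reaction_network n R"
    and hyp: "\<And>rs :: nat \<Rightarrow> reaction.
       (\<forall>i<n. rs i \<in> homeostasis_network n R) \<Longrightarrow> inj_on rs {0..<n} \<Longrightarrow>
       det (mat n n (\<lambda>(i, j). real (fst (rs j) i))) *
       det (mat n n (\<lambda>(i, j). real (snd (rs j) i) - real (fst (rs j) i))) = 0"
    and "positive_vec n x"
  shows "det (B_matrix n R k x) = 0"
proof -
  have "finite R" using \<open>reaction_network n R\<close> unfolding reaction_network_def by auto
  have "det (homeostasis_matrix n R k x) = (-1) ^ (n - 1) * det (B_matrix n R k x)"
    using det_mat_first_row_unit[of "homeostasis_matrix n R k x" n]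
      homeostasis_matrix_first_row[OF \<open>finite R\<close> assms(1,4)]
      homeostasis_matrix_minor[OF \<open>finite R\<close> assms(1,4)] assms(1)
    by (simp add: homeostasis_matrix_def)
  with det_homeostasis_matrix_eq_0[OF \<open>finite R\<close> hyp] show ?thesis by simp
qed

section \<open>Perfect homeostasis along a branch of equilibria\<close>

lemma linearly_stable_det_jacobian:
  assumes "linearly_stable n R k x0 z0"
  shows "det (mat n n (\<lambda>(i, j). mass_action_pderiv n R k i j x0)) \<noteq> 0"
proof
  define J where "J = map_mat complex_of_real (mat n n (\<lambda>(i, j). mass_action_pderiv n R k i j x0))"
  assume "det (mat n n (\<lambda>(i, j). mass_action_pderiv n R k i j x0)) = 0"
  then have "det J = 0" unfolding J_def by (simp add: of_real_hom.hom_det)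
  then obtain v where "v \<in> carrier_vec n" "v \<noteq> 0\<^sub>v n" "J *\<^sub>v v = 0\<^sub>v n"
    using det_0_iff_vec_prod_zero[of J n] by (auto simp: J_def)
  then have "eigenvector J v 0" unfolding eigenvector_def J_def by auto
  then have "eigenvalue J 0" unfolding eigenvalue_def by blast
  with assms show False unfolding linearly_stable_def jacobian_io_field J_def by fastforce
qed

lemma equilibrium_branch_linearized:
  assumes br: "equilibrium_branch n R k X d z0 x0" and z: "\<bar>z - z0\<bar> < d" and "m < n"
    and D: "\<And>l. l < n \<Longrightarrow> ((\<lambda>s. X s l) has_real_derivative D l) (at z)"
  shows "(\<Sum>l<n. mass_action_pderiv n R k m l (X z) * D l) = - (if m = 0 then 1 else 0)"
proof -
  let ?U = "{s. \<bar>s - z0\<bar> < d}"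
  have "((\<lambda>s. io_field n R k s (X s) m) has_real_derivative
      (\<Sum>l<n. mass_action_pderiv n R k m l (X z) * D l) + (if m = 0 then 1 else 0)) (at z)"
    unfolding io_field_def
    by (auto intro!: derivative_eq_intros has_real_derivative_mass_action D)
  then have "((\<lambda>s. 0) has_real_derivative
      (\<Sum>l<n. mass_action_pderiv n R k m l (X z) * D l) + (if m = 0 then 1 else 0)) (at z)"
  proof (rule has_field_derivative_transform_within_open)
    show "open ?U" by (rule open_Collect_less) (auto intro!: continuous_intros)
    show "io_field n R k s (X s) m = 0" if "s \<in> ?U" for s
      using br that \<open>m < n\<close> unfolding equilibrium_branch_def io_equilibrium_def by auto
  qed (use z in simp)
  from DERIV_unique[OF this DERIV_const] show ?thesis by simp
qed

lemma equilibrium_branch_jacobian_nonsingular: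
  assumes br: "equilibrium_branch n R k X d z0 x0"
    and J0: "det (mat n n (\<lambda>(i, j). mass_action_pderiv n R k i j x0)) \<noteq> 0"
  obtains e where "e > 0"
    and "\<And>z. \<bar>z - z0\<bar> < e \<Longrightarrow> det (mat n n (\<lambda>(i, j). mass_action_pderiv n R k i j (X z))) \<noteq> 0"
proof -
  let ?J = "\<lambda>\<xi>. det (mat n n (\<lambda>(i, j). mass_action_pderiv n R k i j \<xi>))"
  have X0: "X z0 l = x0 l" if "l < n" for l using br that unfolding equilibrium_branch_def by auto
  have "((\<lambda>s. X s l) \<longlongrightarrow> X z0 l) (at z0)" if "l < n" for l
  proof -
    have "(\<lambda>s. X s l) differentiable (at z0)" using br that unfolding equilibrium_branch_def by auto
    then show ?thesis using differentiable_imp_continuous_within isCont_def by blast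
  qed
  then have "((\<lambda>s. ?J (X s)) \<longlongrightarrow> ?J (X z0)) (at z0)"
    by (intro tendsto_det_mat tendsto_mass_action_pderiv)
  moreover have "?J (X z0) = ?J x0"
    using mass_action_pderiv_cong[of n "X z0" x0] X0 by (auto intro!: arg_cong[where f=det] eq_matI)
  ultimately have "eventually (\<lambda>s. ?J (X s) \<noteq> 0) (at z0)"
    using J0 by (auto intro: tendsto_imp_eventually_ne)
  then obtain e where "e > 0" "\<And>s. s \<noteq> z0 \<Longrightarrow> dist s z0 < e \<Longrightarrow> ?J (X s) \<noteq> 0"
    unfolding eventually_at by blast
  with that \<open>?J (X z0) = ?J x0\<close> J0 show ?thesis by (metis dist_real_def)
qed

lemma perfect_homeostasis:
  assumes "n \<ge> 2"
    and det_B: "\<And>x. positive_vec n x \<Longrightarrow> det (B_matrix n R k x) = 0"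
    and stable: "linearly_stable n R k x0 z0"
    and br: "equilibrium_branch n R k X d z0 x0"
  shows "\<exists>e>0. \<forall>z. \<bar>z - z0\<bar> < e \<longrightarrow> ((\<lambda>s. X s (n - 1)) has_real_derivative 0) (at z)"
proof -
  obtain e where e: "e > 0"
    and J: "\<And>z. \<bar>z - z0\<bar> < e \<Longrightarrow> det (mat n n (\<lambda>(i, j). mass_action_pderiv n R k i j (X z))) \<noteq> 0"
    using equilibrium_branch_jacobian_nonsingular[OF br linearly_stable_det_jacobian[OF stable]] by blast
  have d: "d > 0" using br unfolding equilibrium_branch_def by simp
  show ?thesis
  proof (intro exI[of _ "min d e"] conjI allI impI)
    fix z assume "\<bar>z - z0\<bar> < min d e"
    then have zd: "\<bar>z - z0\<bar> < d" and ze: "\<bar>z - z0\<bar> < e" by auto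
    have "\<forall>l. \<exists>D. l < n \<longrightarrow> ((\<lambda>s. X s l) has_real_derivative D) (at z)"
      using br zd unfolding equilibrium_branch_def real_differentiable_def by blast
    then obtain D where D: "\<And>l. l < n \<Longrightarrow> ((\<lambda>s. X s l) has_real_derivative D l) (at z)"
      by metis
    have "positive_vec n (X z)" using br zd unfolding equilibrium_branch_def io_equilibrium_def by auto
    then have "det (mat (n - 1) (n - 1) (\<lambda>(i, j). mass_action_pderiv n R k (Suc i) j (X z))) = 0"
      using det_B by (simp add: B_matrix_eq)
    from last_component_eq_0[OF J[OF ze] this] have "D (n - 1) = 0"
      using equilibrium_branch_linearized[OF br zd _ D] by simp
    then show "((\<lambda>s. X s (n - 1)) has_real_derivative 0) (at z)"
      using D[of "n - 1"] \<open>n \<ge> 2\<close> by simp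
  qed (use d e in simp)
qed

section \<open>Continuation of equilibria\<close>

definition norm1 :: "nat \<Rightarrow> (nat \<Rightarrow> real) \<Rightarrow> real" where
  "norm1 n v = (\<Sum>l<n. \<bar>v l\<bar>)"

lemma norm1_component_le: "l < n \<Longrightarrow> \<bar>v l\<bar> \<le> norm1 n v"
  unfolding norm1_def by (rule member_le_sum) auto

lemma norm1_nonneg: "0 \<le> norm1 n v"
  unfolding norm1_def by (auto intro: sum_nonneg)

lemma norm1_cong: "(\<And>l. l < n \<Longrightarrow> v l = w l) \<Longrightarrow> norm1 n v = norm1 n w"
  unfolding norm1_def by (auto intro!: sum.cong)

lemma norm1_diff_triangle:
  "norm1 n (\<lambda>l. a l - c l) \<le> norm1 n (\<lambda>l. a l - b l) + norm1 n (\<lambda>l. b l - c l)"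
  unfolding norm1_def sum.distrib[symmetric] by (rule sum_mono) arith

lemma norm1_segment_le:
  assumes "0 \<le> t" "t \<le> 1"
  shows "norm1 n (\<lambda>l. x' l + t * (x l - x' l) - c l)
           \<le> (1 - t) * norm1 n (\<lambda>l. x' l - c l) + t * norm1 n (\<lambda>l. x l - c l)"
proof -
  have "\<bar>x' l + t * (x l - x' l) - c l\<bar> \<le> (1 - t) * \<bar>x' l - c l\<bar> + t * \<bar>x l - c l\<bar>" for l
  proof -
    have "\<bar>x' l + t * (x l - x' l) - c l\<bar> = \<bar>(1 - t) * (x' l - c l) + t * (x l - c l)\<bar>"
      by (simp add: algebra_simps)
    also have "\<dots> \<le> \<bar>(1 - t) * (x' l - c l)\<bar> + \<bar>t * (x l - c l)\<bar>" by (rule abs_triangle_ineq)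
    finally show ?thesis using assms by (simp add: abs_mult)
  qed
  then show ?thesis unfolding norm1_def sum_distrib_left sum.distrib[symmetric] by (intro sum_mono)
qed

lemma abs_sum_mult_le_norm1:
  assumes "\<And>j. j < n \<Longrightarrow> \<bar>a j\<bar> \<le> c"
  shows "\<bar>\<Sum>j<n. a j * v j\<bar> \<le> c * norm1 n v"
proof -
  have "\<bar>\<Sum>j<n. a j * v j\<bar> \<le> (\<Sum>j<n. \<bar>a j\<bar> * \<bar>v j\<bar>)" by (rule sum_abs[THEN order_trans]) (simp add: abs_mult)
  also have "\<dots> \<le> (\<Sum>j<n. c * \<bar>v j\<bar>)" by (rule sum_mono) (use assms in \<open>auto intro: mult_right_mono\<close>)
  finally show ?thesis by (simp add: norm1_def sum_distrib_left)
qed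

lemma norm1_matrix_mult_le:
  assumes "\<And>m. m < n \<Longrightarrow> \<bar>w m\<bar> \<le> b"
  shows "norm1 n (\<lambda>l. \<Sum>m<n. C l m * w m) \<le> (\<Sum>l<n. \<Sum>m<n. \<bar>C l m\<bar>) * b"
proof -
  have "\<bar>\<Sum>m<n. C l m * w m\<bar> \<le> (\<Sum>m<n. \<bar>C l m\<bar>) * b" for l
  proof -
    have "\<bar>\<Sum>m<n. C l m * w m\<bar> \<le> (\<Sum>m<n. \<bar>C l m\<bar> * \<bar>w m\<bar>)" by (rule sum_abs[THEN order_trans]) (simp add: abs_mult)
    also have "\<dots> \<le> (\<Sum>m<n. \<bar>C l m\<bar> * b)" by (rule sum_mono) (use assms in \<open>auto intro: mult_left_mono\<close>)
    finally show ?thesis by (simp add: sum_distrib_right)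
  qed
  then show ?thesis unfolding norm1_def sum_distrib_right by (intro sum_mono)
qed

lemma norm1_ball_sequentially:
  assumes "\<And>s. (\<And>l. l < n \<Longrightarrow> (\<lambda>m. s m l) \<longlonglongrightarrow> x l) \<Longrightarrow> eventually (\<lambda>m. P (s m)) sequentially"
  obtains \<rho> where "\<rho> > 0" and "\<And>\<xi>. norm1 n (\<lambda>l. \<xi> l - x l) \<le> \<rho> \<Longrightarrow> P \<xi>"
proof (rule ccontr)
  assume "\<not> thesis"
  then have "\<forall>m. \<exists>\<xi>. norm1 n (\<lambda>l. \<xi> l - x l) \<le> inverse (real (Suc m)) \<and> \<not> P \<xi>"
    using that by (metis inverse_positive_iff_positive of_nat_0_less_iff zero_less_Suc)
  then obtain s where s: "\<And>m. norm1 n (\<lambda>l. s m l - x l) \<le> inverse (real (Suc m))" "\<And>m. \<not> P (s m)"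
    by metis
  have "(\<lambda>m. s m l) \<longlonglongrightarrow> x l" if "l < n" for l
  proof -
    have "(\<lambda>m. s m l - x l) \<longlonglongrightarrow> 0"
      by (rule Lim_null_comparison[OF always_eventually LIMSEQ_inverse_real_of_nat])
         (use s(1) norm1_component_le[OF that] order_trans in fastforce)
    then show ?thesis by (rule LIM_zero_cancel)
  qed
  then have "eventually (\<lambda>m. P (s m)) sequentially" by (rule assms)
  then show False using s(2) by simp
qed

lemma tendsto_segment_point:
  fixes f :: "'b \<Rightarrow> real"
  assumes "(f \<longlongrightarrow> a) F" and "\<And>z. 0 \<le> t z \<and> t z \<le> 1"
  shows "((\<lambda>z. a + t z * (f z - a)) \<longlongrightarrow> a) F"
proof -
  have "((\<lambda>z. a + t z * (f z - a) - a) \<longlongrightarrow> 0) F"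
  proof (rule Lim_null_comparison[OF always_eventually])
    show "\<forall>z. norm (a + t z * (f z - a) - a) \<le> norm (f z - a)"
      using assms(2) by (auto simp: abs_mult mult_left_le_one_le)
    show "((\<lambda>z. norm (f z - a)) \<longlongrightarrow> 0) F"
      using assms(1) by (intro tendsto_norm_zero LIM_zero)
  qed
  then show ?thesis by (rule LIM_zero_cancel)
qed

lemma norm1_geometric_steps_convergent:
  assumes "\<And>j. norm1 n (\<lambda>l. s (Suc j) l - s j l) \<le> c * (1 / 2) ^ j"
  obtains L where "\<And>l. l < n \<Longrightarrow> (\<lambda>j. s j l) \<longlonglongrightarrow> L l"
proof -
  have "\<exists>L. (\<lambda>j. s j l) \<longlonglongrightarrow> L" if "l < n" for l
  proof -
    have bound: "norm (s (Suc j) l - s j l) \<le> c * (1 / 2) ^ j" for j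
      using norm1_component_le[OF that, of "\<lambda>l. s (Suc j) l - s j l"] assms[of j] by simp
    have "summable (\<lambda>j. c * (1 / 2 :: real) ^ j)" by (intro summable_mult summable_geometric) simp
    then have "summable (\<lambda>j. s (Suc j) l - s j l)"
      by (rule summable_comparison_test') (rule bound)
    then have "convergent (\<lambda>N. \<Sum>j<N. s (Suc j) l - s j l)"
      using summable_LIMSEQ convergent_def by blast
    then have "convergent (\<lambda>N. s N l - s 0 l)"
      using sum_lessThan_telescope[of "\<lambda>j. s j l"] by simp
    then have "convergent (\<lambda>N. (s N l - s 0 l) + s 0 l)"
      by (intro convergent_add convergent_const)
    then show ?thesis by (simp add: convergent_def)
  qed
  then have "\<forall>l. \<exists>L. l < n \<longrightarrow> (\<lambda>j. s j l) \<longlonglongrightarrow> L" by blast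
  from choice[OF this] show ?thesis using that by blast
qed
lemma tendsto_sum_mult_bounded_zero:
  fixes e q :: "'b \<Rightarrow> nat \<Rightarrow> real"
  assumes "\<And>j. j < n \<Longrightarrow> ((\<lambda>z. e z j) \<longlongrightarrow> 0) F"
    and "eventually (\<lambda>z. \<forall>j<n. \<bar>q z j\<bar> \<le> b) F"
  shows "((\<lambda>z. \<Sum>j<n. e z j * q z j) \<longlongrightarrow> 0) F"
proof (rule Lim_null_comparison)
  show "eventually (\<lambda>z. norm (\<Sum>j<n. e z j * q z j) \<le> (\<Sum>j<n. \<bar>e z j\<bar> * b)) F"
    using assms(2)
  proof eventually_elim
    case (elim z)
    have "\<bar>\<Sum>j<n. e z j * q z j\<bar> \<le> (\<Sum>j<n. \<bar>e z j\<bar> * \<bar>q z j\<bar>)"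
      by (rule sum_abs[THEN order_trans]) (simp add: abs_mult)
    also have "\<dots> \<le> (\<Sum>j<n. \<bar>e z j\<bar> * b)"
      using elim by (intro sum_mono mult_left_mono) auto
    finally show ?case by simp
  qed
  have "((\<lambda>z. \<Sum>j<n. \<bar>e z j\<bar> * b) \<longlongrightarrow> (\<Sum>j<n. \<bar>0\<bar> * b)) F"
    by (rule tendsto_sum, rule tendsto_mult_right, rule tendsto_rabs, rule assms(1)) simp
  then show "((\<lambda>z. \<Sum>j<n. \<bar>e z j\<bar> * b) \<longlongrightarrow> 0) F" by simp
qed

text \<open>The limit of solutions \<open>q\<close> of perturbed linear systems \<open>M(z) q = c\<close> with \<open>M(z) \<longrightarrow> A\<close>: since
  \<open>A (q - v) = (A - M) q\<close> and \<open>q\<close> stays bounded, \<open>q\<close> tends to the solution \<open>v\<close> of \<open>A v = c\<close>.\<close>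
lemma tendsto_perturbed_linear_solution:
  fixes A :: "nat \<Rightarrow> nat \<Rightarrow> real" and M :: "'b \<Rightarrow> nat \<Rightarrow> nat \<Rightarrow> real"
  assumes A: "det (mat n n (\<lambda>(i, j). A i j)) \<noteq> 0"
    and M: "\<And>m j. m < n \<Longrightarrow> j < n \<Longrightarrow> ((\<lambda>z. M z m j) \<longlongrightarrow> A m j) F"
    and eq: "eventually (\<lambda>z. \<forall>m<n. (\<Sum>j<n. M z m j * q z j) = c m) F"
    and bd: "eventually (\<lambda>z. \<forall>j<n. \<bar>q z j\<bar> \<le> b) F"
  obtains v where "\<And>l. l < n \<Longrightarrow> ((\<lambda>z. q z l) \<longlongrightarrow> v l) F"
proof -
  obtain C where CA: "\<And>i j. i < n \<Longrightarrow> j < n \<Longrightarrow> (\<Sum>m<n. C i m * A m j) = (if i = j then 1 else 0)"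
    by (rule mat_inverse_exists[OF A]) auto
  obtain v where Av: "\<And>m. m < n \<Longrightarrow> (\<Sum>j<n. A m j * v j) = c m"
    by (rule mat_solve_exists[OF A, where c=c]) auto
  define r where "r z m = (\<Sum>j<n. (A m j - M z m j) * q z j)" for z m
  have r0: "((\<lambda>z. r z m) \<longlongrightarrow> 0) F" if "m < n" for m
    unfolding r_def
  proof (rule tendsto_sum_mult_bounded_zero[OF _ bd])
    show "((\<lambda>z. A m j - M z m j) \<longlongrightarrow> 0) F" if "j < n" for j
      using tendsto_diff[OF tendsto_const[of "A m j"] M[OF \<open>m < n\<close> that]] by simp
  qed
  have ev: "eventually (\<lambda>z. (\<Sum>m<n. C l m * r z m) = q z l - v l) F" if l: "l < n" for l
    using eq
  proof eventually_elim
    case (elim z)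
    have "(\<Sum>m<n. C l m * r z m) = (\<Sum>m<n. C l m * (\<Sum>j<n. A m j * (q z j - v j)))"
      using elim Av by (simp add: r_def left_diff_distrib right_diff_distrib sum_subtractf)
    also have "\<dots> = (\<Sum>j<n. (\<Sum>m<n. C l m * A m j) * (q z j - v j))"
      by (simp add: sum_distrib_left sum_distrib_right mult_ac) (rule sum.swap)
    also have "\<dots> = (\<Sum>j<n. (if l = j then 1 else 0) * (q z j - v j))" using CA[OF l] by simp
    also have "\<dots> = q z l - v l" using sum_delta_mult[OF l] .
    finally show ?case .
  qed
  have lim: "((\<lambda>z. \<Sum>m<n. C l m * r z m) \<longlongrightarrow> 0) F" for l
    using r0 by (intro tendsto_null_sum tendsto_mult_right_zero) auto
  show ?thesis
    by (rule that, rule LIM_zero_cancel, rule Lim_transform_eventually[OF lim ev])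
qed

text \<open>The implicit function theorem for \<open>io_field n R k z x = 0\<close> near a nondegenerate equilibrium
  \<open>(x0, z0)\<close>, proved with the chord map \<open>x \<mapsto> x - C f(x)\<close>, where \<open>C\<close> is the inverse Jacobian at \<open>x0\<close>:
  on a \<open>norm1\<close>-ball of radius \<open>\<rho>\<close> the Jacobian stays within \<open>1/(2K)\<close> of its value at \<open>x0\<close>,
  which makes the chord map a \<open>1/2\<close>-contraction.\<close>
locale equilibrium_continuation =
  fixes n :: nat and R :: "reaction set" and k :: "reaction \<Rightarrow> real"
    and x0 :: "nat \<Rightarrow> real" and z0 :: real and C :: "nat \<Rightarrow> nat \<Rightarrow> real" and K \<rho> :: real
  assumes equilibrium: "\<And>m. m < n \<Longrightarrow> io_field n R k z0 x0 m = 0"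
    and inverse_left: "\<And>l j. l < n \<Longrightarrow> j < n \<Longrightarrow>
      (\<Sum>m<n. C l m * mass_action_pderiv n R k m j x0) = (if l = j then 1 else 0)"
    and inverse_right: "\<And>i l. i < n \<Longrightarrow> l < n \<Longrightarrow>
      (\<Sum>m<n. mass_action_pderiv n R k i m x0 * C m l) = (if i = l then 1 else 0)"
    and K_eq: "K = (\<Sum>l<n. \<Sum>m<n. \<bar>C l m\<bar>) + 1"
    and radius_pos: "\<rho> > 0"
    and jacobian_close: "\<And>\<xi> i j. norm1 n (\<lambda>l. \<xi> l - x0 l) \<le> \<rho> \<Longrightarrow> i < n \<Longrightarrow> j < n \<Longrightarrow>
      \<bar>mass_action_pderiv n R k i j \<xi> - mass_action_pderiv n R k i j x0\<bar> \<le> 1 / (2 * K)"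
    and jacobian_nonsingular: "\<And>\<xi>. norm1 n (\<lambda>l. \<xi> l - x0 l) \<le> \<rho> \<Longrightarrow>
      det (mat n n (\<lambda>(i, j). mass_action_pderiv n R k i j \<xi>)) \<noteq> 0"
    and ball_positive: "\<And>\<xi>. norm1 n (\<lambda>l. \<xi> l - x0 l) \<le> \<rho> \<Longrightarrow> positive_vec n \<xi>"
begin

definition chord_map :: "real \<Rightarrow> (nat \<Rightarrow> real) \<Rightarrow> nat \<Rightarrow> real" where
  "chord_map z x l = (if l < n then x l - (\<Sum>m<n. C l m * io_field n R k z x m) else x0 l)"

definition in_ball :: "(nat \<Rightarrow> real) \<Rightarrow> bool" where
  "in_ball x \<longleftrightarrow> norm1 n (\<lambda>l. x l - x0 l) \<le> \<rho>"

lemma K_pos: "K > 0" and K_ge: "(\<Sum>l<n. \<Sum>m<n. \<bar>C l m\<bar>) \<le> K"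
proof -
  have "(\<Sum>l<n. \<Sum>m<n. \<bar>C l m\<bar>) \<ge> 0" by (intro sum_nonneg) auto
  then show "K > 0" "(\<Sum>l<n. \<Sum>m<n. \<bar>C l m\<bar>) \<le> K" unfolding K_eq by auto
qed

lemma in_ball_center: "in_ball x0"
  unfolding in_ball_def norm1_def using radius_pos by simp

lemma norm1_C_mult_le:
  "b \<ge> 0 \<Longrightarrow> (\<And>m. m < n \<Longrightarrow> \<bar>w m\<bar> \<le> b) \<Longrightarrow> norm1 n (\<lambda>l. \<Sum>m<n. C l m * w m) \<le> K * b"
  using norm1_matrix_mult_le[of n w b C] K_ge by (meson mult_right_mono order_trans)

lemma mass_action_linearization_error:
  assumes "in_ball x" and "in_ball x'" and "m < n"
  shows "\<bar>mass_action n R k x m - mass_action n R k x' m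
            - (\<Sum>j<n. mass_action_pderiv n R k m j x0 * (x j - x' j))\<bar>
         \<le> norm1 n (\<lambda>l. x l - x' l) / (2 * K)"
proof -
  obtain t where t: "0 \<le> t" "t \<le> 1" and mvt: "mass_action n R k x m - mass_action n R k x' m =
      (\<Sum>j<n. mass_action_pderiv n R k m j (\<lambda>l. x' l + t * (x l - x' l)) * (x j - x' j))"
    using mean_value_mass_action by blast
  have "norm1 n (\<lambda>l. x' l + t * (x l - x' l) - x0 l) \<le> (1 - t) * \<rho> + t * \<rho>"
    using norm1_segment_le[OF t, of n x' x x0] t assms(1,2) unfolding in_ball_def
    by (smt (verit) mult_left_mono)
  then have "norm1 n (\<lambda>l. x' l + t * (x l - x' l) - x0 l) \<le> \<rho>" by (simp add: algebra_simps)
  from jacobian_close[OF this assms(3)]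
  have "\<bar>\<Sum>j<n. (mass_action_pderiv n R k m j (\<lambda>l. x' l + t * (x l - x' l))
            - mass_action_pderiv n R k m j x0) * (x j - x' j)\<bar>
        \<le> 1 / (2 * K) * norm1 n (\<lambda>l. x l - x' l)"
    by (intro abs_sum_mult_le_norm1) auto
  then show ?thesis unfolding mvt by (simp add: left_diff_distrib sum_subtractf)
qed

lemma chord_map_contraction:
  assumes "in_ball x" and "in_ball x'"
  shows "norm1 n (\<lambda>l. chord_map z x l - chord_map z x' l) \<le> norm1 n (\<lambda>l. x l - x' l) / 2"
proof -
  define \<delta> where "\<delta> l = x l - x' l" for l
  define e where "e m = (\<Sum>j<n. mass_action_pderiv n R k m j x0 * \<delta> j)
                       - (mass_action n R k x m - mass_action n R k x' m)" for m
  have "chord_map z x l - chord_map z x' l = (\<Sum>m<n. C l m * e m)" if l: "l < n" for l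
  proof -
    have "\<delta> l = (\<Sum>j<n. (\<Sum>m<n. C l m * mass_action_pderiv n R k m j x0) * \<delta> j)"
      using inverse_left[OF l] sum_delta_mult[OF l, of \<delta>] by simp
    also have "\<dots> = (\<Sum>m<n. C l m * (\<Sum>j<n. mass_action_pderiv n R k m j x0 * \<delta> j))"
      by (simp add: sum_distrib_left sum_distrib_right mult_ac) (rule sum.swap)
    finally have \<delta>_eq: "\<delta> l = \<dots>" .
    have "chord_map z x l - chord_map z x' l =
        \<delta> l - (\<Sum>m<n. C l m * (io_field n R k z x m - io_field n R k z x' m))"
      unfolding chord_map_def \<delta>_def using l by (simp add: sum_subtractf right_diff_distrib)
    also have "\<dots> = (\<Sum>m<n. C l m * e m)"
      unfolding \<delta>_eq e_def io_field_def by (simp add: sum_subtractf[symmetric] right_diff_distrib)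
    finally show ?thesis .
  qed
  then have "norm1 n (\<lambda>l. chord_map z x l - chord_map z x' l) = norm1 n (\<lambda>l. \<Sum>m<n. C l m * e m)"
    by (rule norm1_cong)
  also have "\<dots> \<le> K * (norm1 n \<delta> / (2 * K))"
    using mass_action_linearization_error[OF assms] norm1_nonneg K_pos
    unfolding e_def \<delta>_def by (intro norm1_C_mult_le) (auto simp: abs_minus_commute)
  also have "\<dots> = norm1 n \<delta> / 2" using K_pos by simp
  finally show ?thesis unfolding \<delta>_def .
qed

lemma chord_map_shift:
  "l < n \<Longrightarrow> chord_map z x l - chord_map w x l = (\<Sum>m<n. C l m * (if m = 0 then w - z else 0))"
  unfolding chord_map_def io_field_def
  by (auto simp: sum_subtractf[symmetric] right_diff_distrib[symmetric] intro!: sum.cong)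

lemma norm1_chord_map_shift: "norm1 n (\<lambda>l. chord_map z x l - chord_map w x l) \<le> K * \<bar>z - w\<bar>"
proof -
  have "norm1 n (\<lambda>l. chord_map z x l - chord_map w x l) =
      norm1 n (\<lambda>l. \<Sum>m<n. C l m * (if m = 0 then w - z else 0))"
    by (rule norm1_cong) (rule chord_map_shift)
  also have "\<dots> \<le> K * \<bar>z - w\<bar>" by (rule norm1_C_mult_le) auto
  finally show ?thesis .
qed

lemma chord_map_center: "chord_map z0 x0 = x0"
  using equilibrium by (auto simp: chord_map_def)

definition zeta_radius :: real where
  "zeta_radius = \<rho> / (2 * K)"

lemma zeta_radius_pos: "zeta_radius > 0"
  unfolding zeta_radius_def using radius_pos K_pos by simp

lemma chord_map_in_ball:
  assumes "\<bar>z - z0\<bar> \<le> zeta_radius" and "in_ball x"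
  shows "in_ball (chord_map z x)"
proof -
  have "norm1 n (\<lambda>l. chord_map z x0 l - x0 l) \<le> K * \<bar>z - z0\<bar>"
    using norm1_chord_map_shift[of z x0 z0] by (simp add: chord_map_center)
  moreover have "norm1 n (\<lambda>l. chord_map z x l - chord_map z x0 l) \<le> \<rho> / 2"
    using chord_map_contraction[OF assms(2) in_ball_center, of z] assms(2) unfolding in_ball_def by simp
  ultimately have "norm1 n (\<lambda>l. chord_map z x l - x0 l) \<le> \<rho> / 2 + K * zeta_radius"
    using norm1_diff_triangle[of n "chord_map z x" x0 "chord_map z x0"] assms(1) K_pos
    by (smt (verit) mult_left_mono)
  also have "\<dots> = \<rho>" unfolding zeta_radius_def using K_pos by simp
  finally show ?thesis unfolding in_ball_def .
qed

lemma chord_map_fixed_point_unique: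
  assumes "in_ball p" "in_ball q" "chord_map z p = p" "chord_map z q = q" "l < n"
  shows "p l = q l"
proof -
  have "norm1 n (\<lambda>l. p l - q l) \<le> 0"
    using chord_map_contraction[OF assms(1,2), of z] assms(3,4) by simp
  then show ?thesis using norm1_component_le[OF assms(5), of "\<lambda>l. p l - q l"] by simp
qed

lemma chord_map_fixed_point_equilibrium:
  assumes "chord_map z p = p" "i < n"
  shows "io_field n R k z p i = 0"
proof -
  have Cf: "(\<Sum>m<n. C l m * io_field n R k z p m) = 0" if "l < n" for l
    using fun_cong[OF assms(1), of l] that unfolding chord_map_def by simp
  have "io_field n R k z p i = (\<Sum>m<n. (if i = m then 1 else 0) * io_field n R k z p m)"
    by (rule sum_delta_mult[OF assms(2), symmetric])
  also have "\<dots> = (\<Sum>m<n. (\<Sum>l<n. mass_action_pderiv n R k i l x0 * C l m) * io_field n R k z p m)"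
    using inverse_right[OF assms(2)] by simp
  also have "\<dots> = (\<Sum>l<n. mass_action_pderiv n R k i l x0 * (\<Sum>m<n. C l m * io_field n R k z p m))"
    by (simp add: sum_distrib_left sum_distrib_right mult_ac) (rule sum.swap)
  also have "\<dots> = 0" using Cf by simp
  finally show ?thesis .
qed

lemma chord_map_fixed_point_exists:
  assumes z: "\<bar>z - z0\<bar> \<le> zeta_radius"
  shows "\<exists>p. in_ball p \<and> chord_map z p = p"
proof -
  define s where "s j = (chord_map z ^^ j) x0" for j
  have s_Suc: "s (Suc j) = chord_map z (s j)" for j unfolding s_def by simp
  have s_ball: "in_ball (s j)" for j
    by (induction j) (auto simp: s_Suc s_def in_ball_center intro: chord_map_in_ball[OF z])
  have "norm1 n (\<lambda>l. s (Suc j) l - s j l) \<le> norm1 n (\<lambda>l. s 1 l - s 0 l) * (1 / 2) ^ j" for j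
  proof (induction j)
    case (Suc j)
    have "norm1 n (\<lambda>l. s (Suc (Suc j)) l - s (Suc j) l) \<le> norm1 n (\<lambda>l. s (Suc j) l - s j l) / 2"
      unfolding s_Suc[of "Suc j"] s_Suc[of j] by (rule chord_map_contraction[OF chord_map_in_ball[OF z s_ball] s_ball])
    with Suc show ?case by simp
  qed simp
  then obtain L0 where L0: "\<And>l. l < n \<Longrightarrow> (\<lambda>j. s j l) \<longlonglongrightarrow> L0 l"
    by (rule norm1_geometric_steps_convergent) auto
  define L where "L l = (if l < n then L0 l else x0 l)" for l
  have sL: "(\<lambda>j. s j l) \<longlonglongrightarrow> L l" if "l < n" for l using L0[OF that] that unfolding L_def by simp
  have "in_ball L"
  proof -
    have "(\<lambda>j. norm1 n (\<lambda>l. s j l - x0 l)) \<longlonglongrightarrow> norm1 n (\<lambda>l. L l - x0 l)"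
      unfolding norm1_def by (intro tendsto_intros sL) auto
    then show ?thesis using s_ball unfolding in_ball_def by (meson LIMSEQ_le_const2)
  qed
  moreover have "chord_map z L l = L l" for l
  proof (cases "l < n")
    case True
    have "(\<lambda>j. chord_map z (s j) l) \<longlonglongrightarrow> chord_map z L l"
      unfolding chord_map_def io_field_def using True by (auto intro!: tendsto_intros tendsto_mass_action sL)
    moreover have "(\<lambda>j. chord_map z (s j) l) \<longlonglongrightarrow> L l"
      unfolding s_Suc[symmetric] using LIMSEQ_Suc[OF sL[OF True]] .
    ultimately show ?thesis by (rule LIMSEQ_unique)
  qed (simp add: chord_map_def L_def)
  ultimately show ?thesis by auto
qed

definition branch :: "real \<Rightarrow> nat \<Rightarrow> real" where
  "branch z = (SOME p. in_ball p \<and> chord_map z p = p)"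

lemma branch_fixed_point: "\<bar>z - z0\<bar> \<le> zeta_radius \<Longrightarrow> in_ball (branch z) \<and> chord_map z (branch z) = branch z"
  unfolding branch_def by (rule someI_ex[OF chord_map_fixed_point_exists])

lemma branch_center: "l < n \<Longrightarrow> branch z0 l = x0 l"
  using branch_fixed_point[of z0] zeta_radius_pos
    chord_map_fixed_point_unique[OF _ in_ball_center _ chord_map_center] by simp

lemma branch_lipschitz:
  assumes "\<bar>z - z0\<bar> \<le> zeta_radius" and "\<bar>w - z0\<bar> \<le> zeta_radius"
  shows "norm1 n (\<lambda>l. branch z l - branch w l) \<le> 2 * K * \<bar>z - w\<bar>"
proof -
  note z = branch_fixed_point[OF assms(1)] and w = branch_fixed_point[OF assms(2)]
  have "norm1 n (\<lambda>l. branch z l - branch w l) \<le>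
      norm1 n (\<lambda>l. chord_map z (branch z) l - chord_map z (branch w) l)
      + norm1 n (\<lambda>l. chord_map z (branch w) l - chord_map w (branch w) l)"
    using norm1_diff_triangle[of n "branch z" "branch w" "chord_map z (branch w)"] z w by simp
  also have "\<dots> \<le> norm1 n (\<lambda>l. branch z l - branch w l) / 2 + K * \<bar>z - w\<bar>"
    using chord_map_contraction[of "branch z" "branch w" z] norm1_chord_map_shift[of z "branch w" w] z w
    by (intro add_mono) auto
  finally show ?thesis by simp
qed

lemma eventually_near_in_zeta_interval:
  assumes "\<bar>w - z0\<bar> < zeta_radius"
  shows "eventually (\<lambda>z. \<bar>z - z0\<bar> < zeta_radius \<and> z \<noteq> w) (at w)"
proof -
  have "open {z. \<bar>z - z0\<bar> < zeta_radius}"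
    by (rule open_Collect_less) (auto intro!: continuous_intros)
  from eventually_at_in_open[OF this] show ?thesis using assms by simp
qed

lemma branch_continuous:
  assumes "\<bar>w - z0\<bar> < zeta_radius" and "l < n"
  shows "((\<lambda>z. branch z l) \<longlongrightarrow> branch w l) (at w)"
proof -
  have "eventually (\<lambda>z. norm (branch z l - branch w l) \<le> 2 * K * \<bar>z - w\<bar>) (at w)"
    using eventually_near_in_zeta_interval[OF assms(1)]
  proof eventually_elim
    case (elim z)
    then have "norm1 n (\<lambda>l. branch z l - branch w l) \<le> 2 * K * \<bar>z - w\<bar>"
      using assms(1) elim by (intro branch_lipschitz) simp_all
    then show ?case using norm1_component_le[OF assms(2), of "\<lambda>l. branch z l - branch w l"] by simp
  qed
  moreover have "((\<lambda>z. 2 * K * \<bar>z - w\<bar>) \<longlongrightarrow> 2 * K * \<bar>w - w\<bar>) (at w)"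
    by (intro tendsto_intros)
  then have "((\<lambda>z. 2 * K * \<bar>z - w\<bar>) \<longlongrightarrow> 0) (at w)" by simp
  ultimately have "((\<lambda>z. branch z l - branch w l) \<longlongrightarrow> 0) (at w)"
    by (rule Lim_null_comparison)
  then show ?thesis by (rule LIM_zero_cancel)
qed

lemma branch_secant:
  assumes "\<bar>z - z0\<bar> \<le> zeta_radius" and "\<bar>w - z0\<bar> \<le> zeta_radius" and "m < n"
  shows "mass_action n R k (branch z) m - mass_action n R k (branch w) m = - (z - w) * (if m = 0 then 1 else 0)"
proof -
  have "io_field n R k z (branch z) m = 0" "io_field n R k w (branch w) m = 0"
    using branch_fixed_point chord_map_fixed_point_equilibrium assms by auto
  then show ?thesis unfolding io_field_def by (auto simp: algebra_simps)
qed

lemma branch_difference_quotient_bound: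
  assumes "\<bar>z - z0\<bar> \<le> zeta_radius" and "\<bar>w - z0\<bar> \<le> zeta_radius" and "z \<noteq> w" and "j < n"
  shows "\<bar>(branch z j - branch w j) / (z - w)\<bar> \<le> 2 * K"
proof -
  have "\<bar>branch z j - branch w j\<bar> \<le> 2 * K * \<bar>z - w\<bar>"
    using norm1_component_le[OF assms(4)] branch_lipschitz[OF assms(1,2)] by (smt (verit))
  then show ?thesis using assms(3) by (simp add: abs_divide divide_le_eq)
qed

text \<open>The difference quotients \<open>q\<close> of the branch solve linear systems whose matrices, Jacobians at
  mean-value points, tend to the nonsingular Jacobian at \<open>branch w\<close>.\<close>
lemma branch_differentiable:
  assumes w: "\<bar>w - z0\<bar> < zeta_radius" and l: "l < n"
  shows "(\<lambda>z. branch z l) differentiable (at w)"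
proof -
  define q where "q z j = (branch z j - branch w j) / (z - w)" for z j
  obtain t where t: "\<And>z m. 0 \<le> t z m \<and> t z m \<le> 1 \<and>
      mass_action n R k (branch z) m - mass_action n R k (branch w) m =
      (\<Sum>j<n. mass_action_pderiv n R k m j (\<lambda>i. branch w i + t z m * (branch z i - branch w i))
         * (branch z j - branch w j))"
    by (rule mean_value_mass_action_choice[where x=branch and x'="\<lambda>_. branch w"]) auto
  define \<xi> where "\<xi> z m = (\<lambda>i. branch w i + t z m * (branch z i - branch w i))" for z m
  have "((\<lambda>z. \<xi> z m i) \<longlongrightarrow> branch w i) (at w)" if "i < n" for m i
    unfolding \<xi>_def using branch_continuous[OF w that] t by (intro tendsto_segment_point) auto
  then have M: "((\<lambda>z. mass_action_pderiv n R k m j (\<xi> z m)) \<longlongrightarrow> mass_action_pderiv n R k m j (branch w)) (at w)"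
    if "j < n" for m j
    using that by (intro tendsto_mass_action_pderiv)
  have eq: "eventually (\<lambda>z. \<forall>m<n. (\<Sum>j<n. mass_action_pderiv n R k m j (\<xi> z m) * q z j)
      = - (if m = 0 then 1 else 0)) (at w)"
    using eventually_near_in_zeta_interval[OF w]
  proof (eventually_elim, intro allI impI)
    fix z m assume z: "\<bar>z - z0\<bar> < zeta_radius \<and> z \<noteq> w" and "m < n"
    with w t[of z m] branch_secant[of z w m]
    have "(\<Sum>j<n. mass_action_pderiv n R k m j (\<xi> z m) * (branch z j - branch w j))
        = - (z - w) * (if m = 0 then 1 else 0)"
      unfolding \<xi>_def by simp
    then show "(\<Sum>j<n. mass_action_pderiv n R k m j (\<xi> z m) * q z j) = - (if m = 0 then 1 else 0)"
      using z unfolding q_def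
      by (simp add: sum_divide_distrib[symmetric] mult.assoc[symmetric]) (simp add: field_simps)
  qed
  have bd: "eventually (\<lambda>z. \<forall>j<n. \<bar>q z j\<bar> \<le> 2 * K) (at w)"
    using eventually_near_in_zeta_interval[OF w]
    by eventually_elim (use w branch_difference_quotient_bound in \<open>simp add: q_def\<close>)
  have det: "det (mat n n (\<lambda>(i, j). mass_action_pderiv n R k i j (branch w))) \<noteq> 0"
    using branch_fixed_point w jacobian_nonsingular unfolding in_ball_def by simp
  obtain v where "\<And>l. l < n \<Longrightarrow> ((\<lambda>z. q z l) \<longlongrightarrow> v l) (at w)"
    by (rule tendsto_perturbed_linear_solution[OF det M eq bd]) auto
  then have "((\<lambda>z. branch z l) has_real_derivative v l) (at w)"
    using l unfolding has_field_derivative_iff q_def by simp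
  then show ?thesis unfolding real_differentiable_def by blast
qed

lemma equilibrium_branch_branch: "equilibrium_branch n R k branch zeta_radius z0 x0"
  unfolding equilibrium_branch_def io_equilibrium_def
  using zeta_radius_pos branch_center branch_fixed_point ball_positive chord_map_fixed_point_equilibrium
    branch_differentiable
  by (auto simp: in_ball_def)

end

lemma jacobian_stable_near_equilibrium:
  assumes x0: "positive_vec n x0"
    and J0: "det (mat n n (\<lambda>(i, j). mass_action_pderiv n R k i j x0)) \<noteq> 0"
    and "\<epsilon> > 0"
  obtains \<rho> where "\<rho> > 0"
    and "\<And>\<xi>. norm1 n (\<lambda>l. \<xi> l - x0 l) \<le> \<rho> \<Longrightarrow>
      (\<forall>i<n. \<forall>j<n. \<bar>mass_action_pderiv n R k i j \<xi> - mass_action_pderiv n R k i j x0\<bar> < \<epsilon>)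
      \<and> det (mat n n (\<lambda>(i, j). mass_action_pderiv n R k i j \<xi>)) \<noteq> 0 \<and> positive_vec n \<xi>"
proof (rule norm1_ball_sequentially)
  let ?J = "\<lambda>i j \<xi>. mass_action_pderiv n R k i j \<xi>"
  fix s assume s: "\<And>l. l < n \<Longrightarrow> (\<lambda>m. s m l) \<longlonglongrightarrow> x0 l"
  have ev_all: "eventually (\<lambda>m. \<forall>l<n. P m l) sequentially"
    if "\<And>l. l < n \<Longrightarrow> eventually (\<lambda>m. P m l) sequentially" for P
    using eventually_ball_finite[of "{..<n}" P sequentially] that by (auto elim: eventually_mono)
  have "eventually (\<lambda>m. \<bar>?J i j (s m) - ?J i j x0\<bar> < \<epsilon>) sequentially" if "j < n" for i j
  proof (rule order_tendstoD(2))
    show "(\<lambda>m. \<bar>?J i j (s m) - ?J i j x0\<bar>) \<longlonglongrightarrow> 0"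
      using that by (intro tendsto_rabs_zero LIM_zero tendsto_mass_action_pderiv s)
  qed (rule \<open>\<epsilon> > 0\<close>)
  moreover have "eventually (\<lambda>m. det (mat n n (\<lambda>(i, j). ?J i j (s m))) \<noteq> 0) sequentially"
    using tendsto_det_mat[OF tendsto_mass_action_pderiv[where s=s and x=x0, OF s]] J0
    by (rule tendsto_imp_eventually_ne)
  moreover have "eventually (\<lambda>m. s m l > 0) sequentially" if "l < n" for l
    using order_tendstoD(1)[OF s[OF that]] x0 that unfolding positive_vec_def by blast
  ultimately show "eventually (\<lambda>m. (\<forall>i<n. \<forall>j<n. \<bar>?J i j (s m) - ?J i j x0\<bar> < \<epsilon>)
      \<and> det (mat n n (\<lambda>(i, j). ?J i j (s m))) \<noteq> 0 \<and> positive_vec n (s m)) sequentially"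
    unfolding positive_vec_def by (intro eventually_conj ev_all) auto
qed blast

lemma equilibrium_branch_exists:
  assumes eq: "io_equilibrium n R k x0 z0"
    and J0: "det (mat n n (\<lambda>(i, j). mass_action_pderiv n R k i j x0)) \<noteq> 0"
  shows "\<exists>X d. equilibrium_branch n R k X d z0 x0"
proof -
  obtain C where CA: "\<And>l j. l < n \<Longrightarrow> j < n \<Longrightarrow>
      (\<Sum>m<n. C l m * mass_action_pderiv n R k m j x0) = (if l = j then 1 else 0)"
    and AC: "\<And>i l. i < n \<Longrightarrow> l < n \<Longrightarrow>
      (\<Sum>m<n. mass_action_pderiv n R k i m x0 * C m l) = (if i = l then 1 else 0)"
    by (rule mat_inverse_exists[OF J0]) auto
  define K where "K = (\<Sum>l<n. \<Sum>m<n. \<bar>C l m\<bar>) + 1"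
  have "K > 0" unfolding K_def by (smt (verit) sum_nonneg abs_ge_zero)
  obtain \<rho> where "\<rho> > 0" and ball: "\<And>\<xi>. norm1 n (\<lambda>l. \<xi> l - x0 l) \<le> \<rho> \<Longrightarrow>
      (\<forall>i<n. \<forall>j<n. \<bar>mass_action_pderiv n R k i j \<xi> - mass_action_pderiv n R k i j x0\<bar> < 1 / (2 * K))
      \<and> det (mat n n (\<lambda>(i, j). mass_action_pderiv n R k i j \<xi>)) \<noteq> 0 \<and> positive_vec n \<xi>"
    using jacobian_stable_near_equilibrium[of n x0 R k "1 / (2 * K)"] eq J0 \<open>K > 0\<close>
    unfolding io_equilibrium_def by auto
  interpret equilibrium_continuation n R k x0 z0 C K \<rho>
  proof
    show "io_field n R k z0 x0 m = 0" if "m < n" for m using eq that unfolding io_equilibrium_def by auto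
  qed (use CA AC K_def \<open>\<rho> > 0\<close> ball in \<open>force simp: less_imp_le\<close>)+
  show ?thesis using equilibrium_branch_branch by blast
qed

theorem mainTheorem3:
  fixes n :: nat and R :: "reaction set"
  assumes n2: "n \<ge> 2"
    and RN: "reaction_network n R"
    and hyp: "\<And>rs :: nat \<Rightarrow> reaction.
       (\<forall>i<n. rs i \<in> homeostasis_network n R) \<Longrightarrow> inj_on rs {0..<n} \<Longrightarrow>
       det (mat n n (\<lambda>(i, j). real (fst (rs j) i))) *
       det (mat n n (\<lambda>(i, j). real (snd (rs j) i) - real (fst (rs j) i))) = 0"
  shows "(\<forall>k :: reaction \<Rightarrow> real. (\<forall>r\<in>R. k r > 0) \<longrightarrow>
            (\<forall>x. positive_vec n x \<longrightarrow> det (B_matrix n R k x) = 0))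
       \<and> (\<forall>(k :: reaction \<Rightarrow> real) x0 z0. (\<forall>r\<in>R. k r > 0) \<longrightarrow>
            io_equilibrium n R k x0 z0 \<longrightarrow> linearly_stable n R k x0 z0 \<longrightarrow>
            (\<exists>X d. equilibrium_branch n R k X d z0 x0) \<and>
            (\<forall>X d. equilibrium_branch n R k X d z0 x0 \<longrightarrow>
               (\<exists>e>0. \<forall>z. \<bar>z - z0\<bar> < e \<longrightarrow>
                  ((\<lambda>s. X s (n - 1)) has_real_derivative 0) (at z))))"
proof -
  have det_B: "det (B_matrix n R k x) = 0" if "positive_vec n x" for k x
    by (rule det_B_matrix_eq_0[OF n2 RN _ that]) (rule hyp)
  show ?thesis
  proof (intro conjI allI impI)
    fix k :: "reaction \<Rightarrow> real" and x0 z0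
    assume eq: "io_equilibrium n R k x0 z0" and stable: "linearly_stable n R k x0 z0"
    show "\<exists>X d. equilibrium_branch n R k X d z0 x0"
      using equilibrium_branch_exists[OF eq linearly_stable_det_jacobian[OF stable]] .
    fix X d assume "equilibrium_branch n R k X d z0 x0"
    then show "\<exists>e>0. \<forall>z. \<bar>z - z0\<bar> < e \<longrightarrow> ((\<lambda>s. X s (n - 1)) has_real_derivative 0) (at z)"
      using perfect_homeostasis[OF n2 det_B stable] by blast
  qed (rule det_B)
qed

end
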